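(* Let $\mathsf P=(\mathsf G,\mathsf M)$ be a network coding problem, let $\mathsf P^\dagger$ be the two-layer incremental multicast problem constructed from it, and let $(\lambda,\omega)$ be a rate-capacity tuple for $\mathsf P$. Then: (1) if $T^\dagger(\lambda,\omega)\in\mathsf{CL}\big(\mathrm{proj}_{\mathsf P^\dagger}[\bar\Gamma^*(\mathsf P^\dagger)\cap\mathcal C_I(\mathsf P^\dagger)\cap\mathcal C_T(\mathsf P^\dagger)\cap\mathcal C_D(\mathsf P^\dagger)]\big)$, then $(\lambda,\omega)\in\mathsf{CL}\big(\mathrm{proj}_{\mathsf P}[\bar\Gamma^*(\mathsf P)\cap\mathcal C_I(\mathsf P)\cap\mathcal C_T(\mathsf P)\cap\mathcal C_D(\mathsf P)]\big)$; (2) if $(\lambda,\omega)$ is $0$-achievable with respect to $\mathsf P$, then $T^\dagger(\lambda,\omega)$ is $0$-achievable with respect to $\mathsf P^\dagger$.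
   Context: A network is $\mathsf G=(\mathcal V,\mathcal E)$, $\mathcal V$ a finite set of nodes, $\mathcal E$ a finite set of hyperedges, each $e$ with tail $\mathrm{tail}(e)\in\mathcal V$ and head $\mathrm{head}(e)\subseteq\mathcal V$, without directed cycles. A connection constraint $\mathsf M=(\mathcal S,O,D)$: finite source index set $\mathcal S$, $O:\mathcal S\to2^{\mathcal V}$ (where source $s$ is available), $D:\mathcal S\to2^{\mathcal V}$ (sinks of $s$). A network coding problem is $(\mathsf G,\mathsf M)$. Sources are imaginary edges with $\mathrm{head}(s)=O(s)$; $\mathrm{in}(e)=\{f\in\mathcal S\cup\mathcal E:\mathrm{tail}(e)\in\mathrm{head}(f)\}$, $\mathrm{in}(u)=\{f\in\mathcal S\cup\mathcal E:u\in\mathrm{head}(f)\}$. $\mathrm{SP}(X)$ is the support of $X$. A network code is a family of discrete random variables $\{Y_f:f\in\mathcal S\cup\mathcal E\}$ with finite supports, each $Y_s$ uniform on its support, the $Y_s$ mutually independent, and $H(Y_e\mid Y_f,f\in\mathrm{in}(e))=0$ for all $e$. A rate-capacity tuple is $(\lambda,\omega)$, $\lambda:\mathcal S\to\mathbb R_{\ge0}$, $\omega:\mathcal E\to\mathbb R_{\ge0}$; it is $0$-achievable if there are network codes $\{Y^n_f\}$ and $c_n>0$ with $\lim_nc_n\log|\mathrm{SP}(Y^n_s)|\ge\lambda(s)$, $\lim_nc_n\log|\mathrm{SP}(Y^n_e)|\le\omega(e)$, and $H(Y^n_s\mid Y^n_f,f\in\mathrm{in}(u))=0$ for all $n$, $s$,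 $u\in D(s)$. Rank functions: $\mathcal H[\mathcal N]$ is the set of real functions on subsets of a finite set $\mathcal N$; $g(\alpha\mid\beta)=g(\alpha\cup\beta)-g(\beta)$. $h$ is entropic if it is the joint-entropy function of some discrete random variables indexed by $\mathcal N$, weakly entropic if $ch$ is entropic for some $c>0$, almost entropic if a limit of weakly entropic functions. For a problem with sources $\mathcal S$ and links $\mathcal E$: $\bar\Gamma^*(\cdot)$ is the set of almost entropic functions in $\mathcal H[\mathcal S\cup\mathcal E]$; $\mathcal C_I=\{h:h(\mathcal S)=\sum_sh(s)\}$, $\mathcal C_T=\{h:h(e\mid\mathrm{in}(e))=0\ \forall e\}$, $\mathcal C_D=\{h:h(s\mid\mathrm{in}(u))=0\ \forall s,u\in D(s)\}$; $\mathrm{proj}[h]=(h(s),s\in\mathcal S;h(e),e\in\mathcal E)$ applied elementwise to sets; $\mathsf{CL}(\mathcal R)$ is the set of tuples $(\lambda,\omega)$ for which there exist $(\lambda^n,\omega^n)\in\mathcal R$ and $c_n>0$ with $\lim_nc_n\omega^n(e)\le\omega(e)$ and $\lim_nc_n\lambda^n(s)\ge\lambda(s)$ for all $e,s$. Construction of $\mathsf P^\dagger=(\mathsf G^\dagger,\mathsf M^\dagger)$ from $\mathsf P=((\mathcal V,\mathcal E),(\mathcal S,O,D))$: $\mathcal V^\dagger=\mathcal V\cup\{\gamma_s,\tau_{s,u}:s\in\mathcal S,u\in D(s)\}\cup\{\psi,\phi,\eta,\eta^*\}$ (all new nodes), $\mathcal E^\dagger=\mathcal E\cup\{a_s,b_s,c_s:s\in\mathcal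 S\}\cup\{d_{s,u}:s\in\mathcal S,u\in D(s)\}$, where the links of $\mathcal E$ keep their tails and heads and, for $s\in\mathcal S$, $u\in D(s)$: $\mathrm{tail}(a_s)=\phi$, $\mathrm{head}(a_s)=O(s)\cup\{\gamma_s,\eta^*\}$; $\mathrm{tail}(b_s)=\phi$, $\mathrm{head}(b_s)=\{\gamma_s,\eta,\psi\}\cup\bigcup_{j\ne s}\{\tau_{j,v}:v\in D(j)\}$; $\mathrm{tail}(c_s)=\gamma_s$, $\mathrm{head}(c_s)=\{\eta,\eta^*\}\cup\{\tau_{s,v}:v\in D(s)\}$; $\mathrm{tail}(d_{s,u})=u$, $\mathrm{head}(d_{s,u})=\{\tau_{s,u}\}$. $\mathsf M^\dagger=(\{1',2'\},O^\dagger,D^\dagger)$ with $O^\dagger(1')=O^\dagger(2')=\{\phi\}$, $D^\dagger(1')=\{\tau_{s,u}:s\in\mathcal S,u\in D(s)\}\cup\{\eta,\eta^*,\psi\}$, $D^\dagger(2')=\{\eta,\eta^*\}$. (The original sources of $\mathsf P$ are not sources of $\mathsf P^\dagger$.) For a tuple $(\lambda,\omega)$ for $\mathsf P$, $T^\dagger(\lambda,\omega)=(\lambda^\dagger,\omega^\dagger)$ is the tuple for $\mathsf P^\dagger$ with $\omega^\dagger(e)=\omega(e)$ for $e\in\mathcal E$, $\omega^\dagger(a_s)=\omega^\dagger(b_s)=\omega^\dagger(c_s)=\lambda(s)$, $\omega^\dagger(d_{s,u})=\lambda(s)$, and $\lambda^\dagger(1')=\lambda^\dagger(2')=\sum_{s\in\mathcal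 S}\lambda(s)$. *)

theory Defs
  imports "HOL-Probability.Probability"
begin

text \<open>A network coding problem (G,M): nodes, links (hyperedges with tail and head),
  source index set, O (where source s is available), D (sinks of s).\<close>

record ('v, 'e, 's) problem =
  nodes :: "'v set"
  links :: "'e set"
  ltail :: "'e \<Rightarrow> 'v"
  lhead :: "'e \<Rightarrow> 'v set"
  srcs  :: "'s set"
  orig  :: "'s \<Rightarrow> 'v set"
  dest  :: "'s \<Rightarrow> 'v set"

definition node_rel :: "('v, 'e, 's) problem \<Rightarrow> ('v \<times> 'v) set" where
  "node_rel P = {(ltail P e, w) | e w. e \<in> links P \<and> w \<in> lhead P e}"

definition valid_problem :: "('v, 'e, 's) problem \<Rightarrow> bool" where
  "valid_problem P \<longleftrightarrow>
     finite (nodes P) \<and> finite (links P) \<and> finite (srcs P) \<and>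
     (\<forall>e\<in>links P. ltail P e \<in> nodes P \<and> lhead P e \<subseteq> nodes P) \<and>
     (\<forall>s\<in>srcs P. orig P s \<subseteq> nodes P \<and> dest P s \<subseteq> nodes P) \<and>
     acyclic (node_rel P)"

text \<open>Variables are indexed by sources (Inl) and links (Inr).\<close>

definition idx :: "('v, 'e, 's) problem \<Rightarrow> ('s + 'e) set" where
  "idx P = Inl ` srcs P \<union> Inr ` links P"

definition in_link :: "('v, 'e, 's) problem \<Rightarrow> 'e \<Rightarrow> ('s + 'e) set" where
  "in_link P e = {Inl s | s. s \<in> srcs P \<and> ltail P e \<in> orig P s}
              \<union> {Inr f | f. f \<in> links P \<and> ltail P e \<in> lhead P f}"

definition in_node :: "('v, 'e, 's) problem \<Rightarrow> 'v \<Rightarrow> ('s + 'e) set" where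
  "in_node P u = {Inl s | s. s \<in> srcs P \<and> u \<in> orig P s}
              \<union> {Inr f | f. f \<in> links P \<and> u \<in> lhead P f}"

text \<open>A family of discrete random variables indexed by type 'i is given by its joint
  distribution, a pmf on functions from indices to nat (values relabelled into nat).\<close>

definition ent :: "'a pmf \<Rightarrow> real" where
  "ent q = - (\<Sum>x\<in>set_pmf q. pmf q x * log 2 (pmf q x))"

definition rst :: "'i set \<Rightarrow> ('i \<Rightarrow> nat) \<Rightarrow> ('i \<Rightarrow> nat)" where
  "rst A y = (\<lambda>i. if i \<in> A then y i else 0)"

definition jent :: "('i \<Rightarrow> nat) pmf \<Rightarrow> 'i set \<Rightarrow> real" where
  "jent Q A = ent (map_pmf (rst A) Q)"

definition marg :: "('i \<Rightarrow> nat) pmf \<Rightarrow> 'i \<Rightarrow> nat pmf" where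
  "marg Q i = map_pmf (\<lambda>y. y i) Q"

definition SP :: "('i \<Rightarrow> nat) pmf \<Rightarrow> 'i \<Rightarrow> nat set" where
  "SP Q i = set_pmf (marg Q i)"

definition network_code :: "('v, 'e, 's) problem \<Rightarrow> ('s + 'e \<Rightarrow> nat) pmf \<Rightarrow> bool" where
  "network_code P Q \<longleftrightarrow>
     (\<forall>f\<in>idx P. finite (SP Q f)) \<and>
     (\<forall>s\<in>srcs P. \<forall>x\<in>SP Q (Inl s). pmf (marg Q (Inl s)) x = 1 / real (card (SP Q (Inl s)))) \<and>
     (\<forall>x. pmf (map_pmf (rst (Inl ` srcs P)) Q) (rst (Inl ` srcs P) x)
           = (\<Prod>s\<in>srcs P. pmf (marg Q (Inl s)) (x (Inl s)))) \<and>
     (\<forall>e\<in>links P. jent Q (in_link P e \<union> {Inr e}) - jent Q (in_link P e) = 0)"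

definition rate_capacity_tuple :: "('v, 'e, 's) problem \<Rightarrow> ('s \<Rightarrow> real) \<times> ('e \<Rightarrow> real) \<Rightarrow> bool" where
  "rate_capacity_tuple P t \<longleftrightarrow> (\<forall>s\<in>srcs P. fst t s \<ge> 0) \<and> (\<forall>e\<in>links P. snd t e \<ge> 0)"

definition zero_achievable :: "('v, 'e, 's) problem \<Rightarrow> ('s \<Rightarrow> real) \<times> ('e \<Rightarrow> real) \<Rightarrow> bool" where
  "zero_achievable P t \<longleftrightarrow>
     (\<exists>(Q :: nat \<Rightarrow> ('s + 'e \<Rightarrow> nat) pmf) (c :: nat \<Rightarrow> real).
        (\<forall>n. network_code P (Q n)) \<and> (\<forall>n. c n > 0) \<and>
        (\<forall>s\<in>srcs P. \<exists>L. (\<lambda>n. c n * log 2 (real (card (SP (Q n) (Inl s))))) \<longlonglongrightarrow> L \<and> L \<ge> fst t s) \<and>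
        (\<forall>e\<in>links P. \<exists>L. (\<lambda>n. c n * log 2 (real (card (SP (Q n) (Inr e))))) \<longlonglongrightarrow> L \<and> L \<le> snd t e) \<and>
        (\<forall>n. \<forall>s\<in>srcs P. \<forall>u\<in>dest P s.
            jent (Q n) ({Inl s} \<union> in_node P u) - jent (Q n) (in_node P u) = 0))"

definition entropic_on :: "'i set \<Rightarrow> ('i set \<Rightarrow> real) \<Rightarrow> bool" where
  "entropic_on N h \<longleftrightarrow>
     (\<exists>Q :: ('i \<Rightarrow> nat) pmf. (\<forall>i\<in>N. finite (SP Q i)) \<and> (\<forall>A. A \<subseteq> N \<longrightarrow> h A = jent Q A))"

definition weakly_entropic_on :: "'i set \<Rightarrow> ('i set \<Rightarrow> real) \<Rightarrow> bool" where
  "weakly_entropic_on N h \<longleftrightarrow> (\<exists>c>0. entropic_on N (\<lambda>A. c * h A))"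

definition almost_entropic_on :: "'i set \<Rightarrow> ('i set \<Rightarrow> real) \<Rightarrow> bool" where
  "almost_entropic_on N h \<longleftrightarrow>
     (\<exists>hs :: nat \<Rightarrow> 'i set \<Rightarrow> real. (\<forall>n. weakly_entropic_on N (hs n)) \<and>
        (\<forall>A. A \<subseteq> N \<longrightarrow> (\<lambda>n. hs n A) \<longlonglongrightarrow> h A))"

definition Gamma_bar :: "('v, 'e, 's) problem \<Rightarrow> (('s + 'e) set \<Rightarrow> real) set" where
  "Gamma_bar P = {h. almost_entropic_on (idx P) h}"

definition C_I :: "('v, 'e, 's) problem \<Rightarrow> (('s + 'e) set \<Rightarrow> real) set" where
  "C_I P = {h. h (Inl ` srcs P) = (\<Sum>s\<in>srcs P. h {Inl s})}"

definition C_T :: "('v, 'e, 's) problem \<Rightarrow> (('s + 'e) set \<Rightarrow> real) set" where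
  "C_T P = {h. \<forall>e\<in>links P. h (in_link P e \<union> {Inr e}) - h (in_link P e) = 0}"

definition C_D :: "('v, 'e, 's) problem \<Rightarrow> (('s + 'e) set \<Rightarrow> real) set" where
  "C_D P = {h. \<forall>s\<in>srcs P. \<forall>u\<in>dest P s. h ({Inl s} \<union> in_node P u) - h (in_node P u) = 0}"

definition proj :: "('v, 'e, 's) problem \<Rightarrow> (('s + 'e) set \<Rightarrow> real) \<Rightarrow> ('s \<Rightarrow> real) \<times> ('e \<Rightarrow> real)" where
  "proj P h = ((\<lambda>s. h {Inl s}), (\<lambda>e. h {Inr e}))"

definition CL :: "('v, 'e, 's) problem \<Rightarrow> (('s \<Rightarrow> real) \<times> ('e \<Rightarrow> real)) set
                  \<Rightarrow> (('s \<Rightarrow> real) \<times> ('e \<Rightarrow> real)) set" where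
  "CL P R = {t. \<exists>(ts :: nat \<Rightarrow> ('s \<Rightarrow> real) \<times> ('e \<Rightarrow> real)) (c :: nat \<Rightarrow> real).
       (\<forall>n. ts n \<in> R) \<and> (\<forall>n. c n > 0) \<and>
       (\<forall>e\<in>links P. \<exists>L. (\<lambda>n. c n * snd (ts n) e) \<longlonglongrightarrow> L \<and> L \<le> snd t e) \<and>
       (\<forall>s\<in>srcs P. \<exists>L. (\<lambda>n. c n * fst (ts n) s) \<longlonglongrightarrow> L \<and> L \<ge> fst t s)}"

definition outer_bound :: "('v, 'e, 's) problem \<Rightarrow> (('s \<Rightarrow> real) \<times> ('e \<Rightarrow> real)) set" where
  "outer_bound P = CL P (proj P ` (Gamma_bar P \<inter> C_I P \<inter> C_T P \<inter> C_D P))"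

datatype ('v, 's) dnode = OldN 'v | Gam 's | Tau 's 'v | Psi | Phi | Eta | EtaStar
datatype ('v, 's, 'e) dlink = OldL 'e | La 's | Lb 's | Lc 's | Ld 's 'v
datatype dsrc = Src1 | Src2

fun dtail :: "('v, 'e, 's) problem \<Rightarrow> ('v, 's, 'e) dlink \<Rightarrow> ('v, 's) dnode" where
  "dtail P (OldL e) = OldN (ltail P e)"
| "dtail P (La s) = Phi"
| "dtail P (Lb s) = Phi"
| "dtail P (Lc s) = Gam s"
| "dtail P (Ld s u) = OldN u"

fun dhead :: "('v, 'e, 's) problem \<Rightarrow> ('v, 's, 'e) dlink \<Rightarrow> ('v, 's) dnode set" where
  "dhead P (OldL e) = OldN ` lhead P e"
| "dhead P (La s) = OldN ` orig P s \<union> {Gam s, EtaStar}"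
| "dhead P (Lb s) = {Gam s, Eta, Psi} \<union> {Tau j v | j v. j \<in> srcs P \<and> j \<noteq> s \<and> v \<in> dest P j}"
| "dhead P (Lc s) = {Eta, EtaStar} \<union> {Tau s v | v. v \<in> dest P s}"
| "dhead P (Ld s u) = {Tau s u}"

definition Pdag :: "('v, 'e, 's) problem \<Rightarrow> (('v, 's) dnode, ('v, 's, 'e) dlink, dsrc) problem" where
  "Pdag P = \<lparr>
     nodes = OldN ` nodes P \<union> Gam ` srcs P \<union> {Tau s u | s u. s \<in> srcs P \<and> u \<in> dest P s}
             \<union> {Psi, Phi, Eta, EtaStar},
     links = OldL ` links P \<union> La ` srcs P \<union> Lb ` srcs P \<union> Lc ` srcs P
             \<union> {Ld s u | s u. s \<in> srcs P \<and> u \<in> dest P s},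
     ltail = dtail P,
     lhead = dhead P,
     srcs = {Src1, Src2},
     orig = (\<lambda>_. {Phi}),
     dest = (\<lambda>x. if x = Src1
                 then {Tau s u | s u. s \<in> srcs P \<and> u \<in> dest P s} \<union> {Eta, EtaStar, Psi}
                 else {Eta, EtaStar}) \<rparr>"

fun Tdag_cap :: "('s \<Rightarrow> real) \<Rightarrow> ('e \<Rightarrow> real) \<Rightarrow> ('v, 's, 'e) dlink \<Rightarrow> real" where
  "Tdag_cap l w (OldL e) = w e"
| "Tdag_cap l w (La s) = l s"
| "Tdag_cap l w (Lb s) = l s"
| "Tdag_cap l w (Lc s) = l s"
| "Tdag_cap l w (Ld s u) = l s"

definition Tdag :: "('v, 'e, 's) problem \<Rightarrow> ('s \<Rightarrow> real) \<times> ('e \<Rightarrow> real)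
                    \<Rightarrow> (dsrc \<Rightarrow> real) \<times> (('v, 's, 'e) dlink \<Rightarrow> real)" where
  "Tdag P t = ((\<lambda>_. \<Sum>s\<in>srcs P. fst t s), Tdag_cap (fst t) (snd t))"

end

theory Submission
  imports Defs "HOL-Library.Nat_Bijection"
begin

text \<open>
  (1) A point of the outer bound of \<open>P\<^sup>\<dagger>\<close> is attained by one almost entropic polymatroid \<open>g\<close>
  satisfying the network constraints. In \<open>P\<^sup>\<dagger>\<close> the sink \<open>\<psi>\<close> recovers source \<open>1'\<close> from the
  links \<open>b\<^sub>s\<close>, and \<open>\<eta>\<close>, \<open>\<eta>\<^sup>*\<close> recover both sources from the links \<open>b\<^sub>s, c\<^sub>s\<close> and \<open>a\<^sub>s, c\<^sub>s\<close>.
  As the capacities add up exactly to the source rates, all inequalities involved are tight: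
  \<open>a\<^sub>s, b\<^sub>s, c\<^sub>s\<close> have rank \<open>\<lambda>(s)\<close>, the \<open>a\<^sub>s\<close> are independent, and so are the \<open>b\<^sub>s, c\<^sub>s\<close>.
  By acyclicity all old links are functions of the \<open>a\<^sub>s\<close>; the sink \<open>\<tau>\<^sub>s\<^sub>,\<^sub>u\<close> sees besides
  \<open>d\<^sub>s\<^sub>,\<^sub>u\<close> only side information independent of the \<open>a\<^sub>s\<close>, which forces \<open>a\<^sub>s\<close> to be a
  function of the inputs of \<open>u\<close>. Reading source \<open>s\<close> as the link \<open>a\<^sub>s\<close> gives a point of the outer
  bound of \<open>P\<close>.

  (2) Conversely, a decoding code for \<open>P\<close> is turned into one for \<open>P\<^sup>\<dagger>\<close>: the sources \<open>1'\<close>,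
  \<open>2'\<close> carry tuples \<open>X\<close>, \<open>Y\<close>, the links \<open>b\<^sub>s\<close>, \<open>c\<^sub>s\<close> carry \<open>X\<^sub>s\<close>, \<open>Y\<^sub>s\<close>, and \<open>a\<^sub>s\<close> carries
  \<open>X\<^sub>s + Y\<^sub>s mod M\<^sub>s\<close>, the message of source \<open>s\<close> for a \<open>k\<close>-fold use of the code for \<open>P\<close>.
  Block lengths \<open>k\<close> and alphabet sizes \<open>M\<^sub>s \<approx> 2\<^bsup>k \<lambda>(s) / c\<^esup>\<close> realise the rates.
\<close>

section \<open>Entropy of finite distributions\<close>

lemma pmf_map_pmf_eq_sum_fiber:
  assumes "finite (set_pmf q)"
  shows "pmf (map_pmf f q) w = (\<Sum>z\<in>{z\<in>set_pmf q. f z = w}. pmf q z)"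
proof -
  have "pmf (map_pmf f q) w = measure q (f -` {w} \<inter> set_pmf q)"
    by (simp add: pmf_map measure_Int_set_pmf)
  also have "\<dots> = (\<Sum>z\<in>f -` {w} \<inter> set_pmf q. pmf q z)"
    by (rule measure_measure_pmf_finite) (use assms in auto)
  also have "f -` {w} \<inter> set_pmf q = {z\<in>set_pmf q. f z = w}" by auto
  finally show ?thesis .
qed

lemma pmf_le_pmf_map_pmf:
  assumes "finite (set_pmf q)" "z \<in> set_pmf q"
  shows "pmf q z \<le> pmf (map_pmf f q) (f z)"
  unfolding pmf_map_pmf_eq_sum_fiber[OF assms(1)] by (rule member_le_sum) (use assms in auto)

lemma pmf_map_pmf_pos:
  assumes "finite (set_pmf q)" "z \<in> set_pmf q"
  shows "0 < pmf (map_pmf f q) (f z)"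
  using pmf_le_pmf_map_pmf[OF assms, of f] assms(2) pmf_positive[of z q] by linarith

lemma ent_map_pmf_eq:
  assumes fin: "finite (set_pmf q)"
  shows "ent (map_pmf f q) = - (\<Sum>z\<in>set_pmf q. pmf q z * log 2 (pmf (map_pmf f q) (f z)))"
proof -
  let ?p = "pmf (map_pmf f q)"
  have "(\<Sum>w\<in>f ` set_pmf q. ?p w * log 2 (?p w))
      = (\<Sum>w\<in>f ` set_pmf q. \<Sum>z\<in>{z\<in>set_pmf q. f z = w}. pmf q z * log 2 (?p (f z)))"
    by (intro sum.cong refl) (auto simp: pmf_map_pmf_eq_sum_fiber[OF fin] sum_distrib_right)
  also have "\<dots> = (\<Sum>z\<in>set_pmf q. pmf q z * log 2 (?p (f z)))"
    by (rule sum.image_gen[symmetric]) (rule fin)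
  finally show ?thesis by (simp only: ent_def set_map_pmf)
qed

lemma ent_map_pmf_inj:
  assumes "inj_on f (set_pmf q)"
  shows "ent (map_pmf f q) = ent q"
proof -
  have "ent (map_pmf f q)
      = - (\<Sum>z\<in>set_pmf q. pmf (map_pmf f q) (f z) * log 2 (pmf (map_pmf f q) (f z)))"
    by (simp add: ent_def sum.reindex[OF assms])
  then show ?thesis by (simp add: pmf_map_inj[OF assms] ent_def)
qed

lemma ent_minus_ent_map_pmf:
  assumes "finite (set_pmf q)"
  shows "ent q - ent (map_pmf f q)
       = (\<Sum>z\<in>set_pmf q. pmf q z * (log 2 (pmf (map_pmf f q) (f z)) - log 2 (pmf q z)))"
  unfolding ent_map_pmf_eq[OF assms] by (simp add: ent_def right_diff_distrib sum_subtractf)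

lemma ent_map_pmf_le:
  assumes fin: "finite (set_pmf q)"
  shows "ent (map_pmf f q) \<le> ent q"
proof -
  have "0 \<le> (\<Sum>z\<in>set_pmf q. pmf q z * (log 2 (pmf (map_pmf f q) (f z)) - log 2 (pmf q z)))"
  proof (intro sum_nonneg mult_nonneg_nonneg)
    fix z assume z: "z \<in> set_pmf q"
    then show "0 \<le> log 2 (pmf (map_pmf f q) (f z)) - log 2 (pmf q z)"
      using pmf_le_pmf_map_pmf[OF fin z, of f] by (simp add: pmf_positive)
  qed simp
  then show ?thesis using ent_minus_ent_map_pmf[OF fin, of f] by simp
qed

lemma inj_on_if_ent_map_pmf_eq:
  assumes fin: "finite (set_pmf q)" and eq: "ent (map_pmf f q) = ent q"
  shows "inj_on f (set_pmf q)"
proof (rule inj_onI, rule ccontr)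
  fix z1 z2
  assume z1: "z1 \<in> set_pmf q" and z2: "z2 \<in> set_pmf q" and "f z1 = f z2" and "z1 \<noteq> z2"
  have "pmf q z1 < pmf q z1 + pmf q z2" using z2 by (simp add: pmf_positive)
  also have "\<dots> \<le> (\<Sum>z\<in>{z\<in>set_pmf q. f z = f z1}. pmf q z)"
    using sum_mono2[of _ "{z1, z2}" "pmf q"] fin z1 z2 \<open>f z1 = f z2\<close> \<open>z1 \<noteq> z2\<close> by auto
  finally have lt: "pmf q z1 < pmf (map_pmf f q) (f z1)" by (simp add: pmf_map_pmf_eq_sum_fiber[OF fin])
  have "0 < (\<Sum>z\<in>set_pmf q. pmf q z * (log 2 (pmf (map_pmf f q) (f z)) - log 2 (pmf q z)))"
  proof (rule sum_pos2[OF fin z1])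
    show "0 < pmf q z1 * (log 2 (pmf (map_pmf f q) (f z1)) - log 2 (pmf q z1))"
      using lt z1 by (simp add: pmf_positive)
  next
    fix z assume z: "z \<in> set_pmf q"
    then show "0 \<le> pmf q z * (log 2 (pmf (map_pmf f q) (f z)) - log 2 (pmf q z))"
      using pmf_le_pmf_map_pmf[OF fin z, of f] by (simp add: pmf_positive)
  qed
  then show False using ent_minus_ent_map_pmf[OF fin, of f] eq by simp
qed

lemma gibbs_inequality:
  assumes "finite S" and p: "\<And>z. z \<in> S \<Longrightarrow> p z > 0" and r: "\<And>z. z \<in> S \<Longrightarrow> r z > 0"
    and "sum p S = 1" and "sum r S \<le> 1"
  shows "(\<Sum>z\<in>S. p z * log 2 (r z / p z)) \<le> 0"
proof -
  have "(\<Sum>z\<in>S. p z * log 2 (r z / p z)) \<le> (\<Sum>z\<in>S. (r z - p z) / ln 2)"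
  proof (rule sum_mono)
    fix z assume z: "z \<in> S"
    have "p z * ln (r z / p z) \<le> p z * (r z / p z - 1)"
      using p[OF z] r[OF z] by (intro mult_left_mono ln_le_minus_one) auto
    also have "\<dots> = r z - p z" using p[OF z] by (simp add: field_simps)
    finally show "p z * log 2 (r z / p z) \<le> (r z - p z) / ln 2"
      by (simp add: log_def divide_right_mono)
  qed
  also have "\<dots> = (sum r S - sum p S) / ln 2" by (simp add: sum_divide_distrib[symmetric] sum_subtractf)
  also have "\<dots> \<le> 0" using assms by (simp add: divide_nonpos_pos)
  finally show ?thesis .
qed

text \<open>Submodularity is proved for three coarsenings \<open>\<alpha>\<close>, \<open>\<beta>\<close>, \<open>\<gamma>\<close> of \<open>q\<close> where \<open>\<gamma>\<close> factors
  through both \<open>\<alpha>\<close> and \<open>\<beta>\<close> and \<open>(\<alpha>, \<beta>)\<close> is injective; Gibbs' inequality is applied to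
  the sub-probability \<open>p\<^sub>\<alpha> p\<^sub>\<beta> / p\<^sub>\<gamma>\<close>.\<close>

lemma sum_pmf_map_pmf_ratio_le_1:
  assumes fin: "finite (set_pmf q)"
    and ga: "\<And>z. z \<in> set_pmf q \<Longrightarrow> \<gamma> z = ga (\<alpha> z)"
    and gb: "\<And>z. z \<in> set_pmf q \<Longrightarrow> \<gamma> z = gb (\<beta> z)"
    and inj: "inj_on (\<lambda>z. (\<alpha> z, \<beta> z)) (set_pmf q)"
  shows "(\<Sum>z\<in>set_pmf q. pmf (map_pmf \<alpha> q) (\<alpha> z) * pmf (map_pmf \<beta> q) (\<beta> z)
           / pmf (map_pmf \<gamma> q) (\<gamma> z)) \<le> 1"
proof -
  define S where "S = set_pmf q"
  define Pa where "Pa = pmf (map_pmf \<alpha> q)"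
  define Pb where "Pb = pmf (map_pmf \<beta> q)"
  define Pc where "Pc = pmf (map_pmf \<gamma> q)"
  define F where "F = (\<lambda>(a, b). Pa a * Pb b / Pc (ga a))"
  define T where "T = (SIGMA a:\<alpha> ` S. {b\<in>\<beta> ` S. gb b = ga a})"
  have finS: "finite S" using fin by (simp add: S_def)
  have fiber: "(\<Sum>b\<in>{b\<in>\<beta> ` S. gb b = c}. Pb b) = Pc c" for c
  proof -
    define T where "T = {z\<in>S. gb (\<beta> z) = c}"
    have "Pc c = sum (pmf q) T"
      unfolding Pc_def pmf_map_pmf_eq_sum_fiber[OF fin] T_def by (intro sum.cong) (auto simp: gb S_def)
    also have "\<dots> = (\<Sum>b\<in>\<beta> ` T. \<Sum>z\<in>{z\<in>T. \<beta> z = b}. pmf q z)"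
      by (rule sum.image_gen) (use finS in \<open>simp add: T_def\<close>)
    also have "\<dots> = (\<Sum>b\<in>{b\<in>\<beta> ` S. gb b = c}. Pb b)"
      unfolding Pb_def pmf_map_pmf_eq_sum_fiber[OF fin]
      by (intro sum.cong) (auto simp: T_def S_def)
    finally show ?thesis by simp
  qed
  have "(\<Sum>z\<in>S. Pa (\<alpha> z) * Pb (\<beta> z) / Pc (\<gamma> z)) = sum F ((\<lambda>z. (\<alpha> z, \<beta> z)) ` S)"
    using inj by (simp add: sum.reindex F_def ga S_def)
  also have "\<dots> \<le> sum F T"
    by (rule sum_mono2) (use finS ga gb in \<open>auto simp: T_def S_def F_def Pa_def Pb_def Pc_def\<close>)
  also have "\<dots> = (\<Sum>a\<in>\<alpha> ` S. Pa a / Pc (ga a) * (\<Sum>b\<in>{b\<in>\<beta> ` S. gb b = ga a}. Pb b))"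
    unfolding T_def F_def using finS by (subst sum.Sigma[symmetric]) (auto simp: sum_distrib_left)
  also have "\<dots> = (\<Sum>a\<in>\<alpha> ` S. Pa a)"
  proof (rule sum.cong[OF refl])
    fix a assume "a \<in> \<alpha> ` S"
    then obtain z where "z \<in> S" "a = \<alpha> z" by auto
    then have "0 < Pc (ga a)" using pmf_map_pmf_pos[OF fin, of z \<gamma>] ga[of z] by (simp add: Pc_def S_def)
    then show "Pa a / Pc (ga a) * (\<Sum>b\<in>{b\<in>\<beta> ` S. gb b = ga a}. Pb b) = Pa a" by (simp add: fiber)
  qed
  also have "\<dots> = 1" unfolding Pa_def S_def by (rule sum_pmf_eq_1) (use fin in auto)
  finally show ?thesis by (simp add: S_def Pa_def Pb_def Pc_def)
qed

lemma ent_submodular: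
  assumes fin: "finite (set_pmf q)"
    and ga: "\<And>z. z \<in> set_pmf q \<Longrightarrow> \<gamma> z = ga (\<alpha> z)"
    and gb: "\<And>z. z \<in> set_pmf q \<Longrightarrow> \<gamma> z = gb (\<beta> z)"
    and inj: "inj_on (\<lambda>z. (\<alpha> z, \<beta> z)) (set_pmf q)"
  shows "ent q + ent (map_pmf \<gamma> q) \<le> ent (map_pmf \<alpha> q) + ent (map_pmf \<beta> q)"
proof -
  define S where "S = set_pmf q"
  define p where "p = pmf q"
  define Pa where "Pa = pmf (map_pmf \<alpha> q)"
  define Pb where "Pb = pmf (map_pmf \<beta> q)"
  define Pc where "Pc = pmf (map_pmf \<gamma> q)"
  define r where "r z = Pa (\<alpha> z) * Pb (\<beta> z) / Pc (\<gamma> z)" for z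
  have pos: "0 < Pa (\<alpha> z)" "0 < Pb (\<beta> z)" "0 < Pc (\<gamma> z)" "0 < p z" if "z \<in> S" for z
    using pmf_map_pmf_pos[OF fin] that by (simp_all add: Pa_def Pb_def Pc_def p_def S_def pmf_positive)
  have "(\<Sum>z\<in>S. p z * log 2 (r z / p z)) \<le> 0"
  proof (rule gibbs_inequality)
    show "sum r S \<le> 1"
      using sum_pmf_map_pmf_ratio_le_1[where ga = ga and gb = gb, OF fin ga gb inj] by (simp add: r_def Pa_def Pb_def Pc_def S_def)
  qed (use fin pos in \<open>auto simp: S_def p_def r_def sum_pmf_eq_1\<close>)
  moreover have "(\<Sum>z\<in>S. p z * log 2 (r z / p z))
      = (\<Sum>z\<in>S. p z * log 2 (Pa (\<alpha> z))) + (\<Sum>z\<in>S. p z * log 2 (Pb (\<beta> z)))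
        - (\<Sum>z\<in>S. p z * log 2 (Pc (\<gamma> z))) - (\<Sum>z\<in>S. p z * log 2 (p z))"
    unfolding sum.distrib[symmetric] sum_subtractf[symmetric]
  proof (intro sum.cong refl)
    fix z assume "z \<in> S"
    then show "p z * log 2 (r z / p z) = p z * log 2 (Pa (\<alpha> z)) + p z * log 2 (Pb (\<beta> z))
        - p z * log 2 (Pc (\<gamma> z)) - p z * log 2 (p z)"
      using pos[of z] by (simp add: r_def log_divide log_mult algebra_simps)
  qed
  ultimately show ?thesis
    unfolding ent_map_pmf_eq[OF fin] by (simp add: ent_def S_def p_def Pa_def Pb_def Pc_def)
qed

lemma rst_rst: "A \<subseteq> B \<Longrightarrow> rst A (rst B y) = rst A y"
  by (auto simp: rst_def fun_eq_iff)

lemma map_pmf_rst_rst: "A \<subseteq> B \<Longrightarrow> map_pmf (rst A) (map_pmf (rst B) Q) = map_pmf (rst A) Q"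
  by (simp add: pmf.map_comp comp_def rst_rst)

lemma finite_set_pmf_map_rst:
  assumes "finite B" "\<And>i. i \<in> B \<Longrightarrow> finite (SP Q i)"
  shows "finite (set_pmf (map_pmf (rst B) Q))"
proof (rule finite_subset)
  show "set_pmf (map_pmf (rst B) Q) \<subseteq> PiE_dflt B 0 (SP Q)"
    by (auto simp: PiE_dflt_def rst_def SP_def marg_def)
qed (use assms in \<open>intro finite_PiE_dflt\<close>)

lemma jent_empty: "jent Q {} = 0"
proof -
  have "rst {} = (\<lambda>y i. 0)" by (auto simp: rst_def fun_eq_iff)
  have "map_pmf (rst {}) Q = return_pmf (\<lambda>i. 0)" unfolding \<open>rst {} = _\<close> by (rule map_pmf_const)
  then show ?thesis by (simp add: jent_def ent_def)
qed

lemma jent_mono: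
  assumes "finite B" "\<And>i. i \<in> B \<Longrightarrow> finite (SP Q i)" "A \<subseteq> B"
  shows "jent Q A \<le> jent Q B"
  using ent_map_pmf_le[OF finite_set_pmf_map_rst[OF assms(1,2)], of "rst A"]
  by (simp add: jent_def map_pmf_rst_rst[OF assms(3)])

lemma jent_submodular:
  assumes "finite (A \<union> B)" "\<And>i. i \<in> A \<union> B \<Longrightarrow> finite (SP Q i)"
  shows "jent Q (A \<union> B) + jent Q (A \<inter> B) \<le> jent Q A + jent Q B"
proof -
  define q where "q = map_pmf (rst (A \<union> B)) Q"
  have "ent q + ent (map_pmf (rst (A \<inter> B)) q) \<le> ent (map_pmf (rst A) q) + ent (map_pmf (rst B) q)"
  proof (rule ent_submodular[where ga = "rst (A \<inter> B)" and gb = "rst (A \<inter> B)"])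
    show "finite (set_pmf q)" unfolding q_def by (rule finite_set_pmf_map_rst[OF assms])
    show "inj_on (\<lambda>z. (rst A z, rst B z)) (set_pmf q)"
      by (rule inj_onI) (auto simp: q_def rst_def fun_eq_iff split: if_splits)
  qed (auto simp: rst_def fun_eq_iff)
  moreover have "map_pmf (rst C) q = map_pmf (rst C) Q" if "C \<in> {A, B, A \<inter> B}" for C
    unfolding q_def using that by (intro map_pmf_rst_rst) auto
  ultimately show ?thesis by (simp add: q_def jent_def)
qed

lemma rst_eq_if_jent_Un_eq:
  assumes "finite (A \<union> B)" "\<And>i. i \<in> A \<union> B \<Longrightarrow> finite (SP Q i)"
    and eq: "jent Q (A \<union> B) = jent Q A"
    and "y \<in> set_pmf Q" "y' \<in> set_pmf Q" "rst A y = rst A y'"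
  shows "rst B y = rst B y'"
proof -
  define q where "q = map_pmf (rst (A \<union> B)) Q"
  have fin: "finite (set_pmf q)" unfolding q_def by (rule finite_set_pmf_map_rst[OF assms(1,2)])
  have "ent (map_pmf (rst A) q) = ent q" using eq by (simp add: q_def jent_def map_pmf_rst_rst)
  then have "inj_on (rst A) (set_pmf q)" by (rule inj_on_if_ent_map_pmf_eq[OF fin])
  then have "rst (A \<union> B) y = rst (A \<union> B) y'"
    by (rule inj_onD) (use assms(4-6) in \<open>auto simp: q_def rst_rst\<close>)
  then show ?thesis by (metis Un_upper2 rst_rst)
qed

lemma eq_on_support_if_jent_Un_eq:
  assumes "finite (I \<union> {j})" "\<And>i. i \<in> I \<union> {j} \<Longrightarrow> finite (SP Q i)"
    and "jent Q (I \<union> {j}) = jent Q I"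
    and "y \<in> set_pmf Q" "y' \<in> set_pmf Q" "\<forall>i\<in>I. y i = y' i"
  shows "y j = y' j"
proof -
  have "rst I y = rst I y'" using assms(6) by (auto simp: rst_def)
  then have "rst {j} y = rst {j} y'" using rst_eq_if_jent_Un_eq[of I "{j}" Q y y'] assms(1-5) by blast
  then show ?thesis by (metis rst_def singletonI)
qed

lemma jent_Un_eq_if_rst_eq:
  assumes "\<And>y y'. y \<in> set_pmf Q \<Longrightarrow> y' \<in> set_pmf Q \<Longrightarrow> rst A y = rst A y' \<Longrightarrow> rst B y = rst B y'"
  shows "jent Q (A \<union> B) = jent Q A"
proof -
  define q where "q = map_pmf (rst (A \<union> B)) Q"
  have "inj_on (rst A) (set_pmf q)"
  proof (rule inj_onI)
    fix z z' assume "z \<in> set_pmf q" "z' \<in> set_pmf q" "rst A z = rst A z'"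
    then obtain y y' where "y \<in> set_pmf Q" "y' \<in> set_pmf Q" "z = rst (A \<union> B) y" "z' = rst (A \<union> B) y'"
      "rst A y = rst A y'"
      by (auto simp: q_def rst_rst)
    with assms[of y y'] show "z = z'" by (auto simp: rst_def fun_eq_iff) metis+
  qed
  then have "ent (map_pmf (rst A) q) = ent q" by (rule ent_map_pmf_inj)
  then show ?thesis by (simp add: q_def jent_def map_pmf_rst_rst)
qed

section \<open>Polymatroids\<close>

locale polymatroid =
  fixes N :: "'i set" and g :: "'i set \<Rightarrow> real"
  assumes empty [simp]: "g {} = 0"
    and mono: "A \<subseteq> B \<Longrightarrow> B \<subseteq> N \<Longrightarrow> g A \<le> g B"
    and submodular: "A \<subseteq> N \<Longrightarrow> B \<subseteq> N \<Longrightarrow> g (A \<union> B) + g (A \<inter> B) \<le> g A + g B"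
begin

lemma nonneg: "A \<subseteq> N \<Longrightarrow> 0 \<le> g A"
  using mono[of "{}" A] by simp

lemma subadditive:
  assumes "A \<subseteq> N" "B \<subseteq> N" shows "g (A \<union> B) \<le> g A + g B"
proof -
  have "0 \<le> g (A \<inter> B)" using assms by (intro nonneg) auto
  then show ?thesis using submodular[OF assms] by linarith
qed

lemma subadditive_UN:
  assumes "finite I" "\<And>i. i \<in> I \<Longrightarrow> F i \<subseteq> N"
  shows "g (\<Union>i\<in>I. F i) \<le> (\<Sum>i\<in>I. g (F i))"
  using assms
proof (induction I rule: finite_induct)
  case (insert x I)
  then have "g (F x \<union> (\<Union>i\<in>I. F i)) \<le> g (F x) + g (\<Union>i\<in>I. F i)" by (intro subadditive) auto
  with insert show ?case by simp
qed simp

lemma le_sum_singletons: "finite W \<Longrightarrow> W \<subseteq> N \<Longrightarrow> g W \<le> (\<Sum>i\<in>W. g {i})"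
  using subadditive_UN[of W "\<lambda>i. {i}"] by auto

lemma diminishing_returns:
  assumes "X \<subseteq> N" "Y \<subseteq> Z" "Z \<subseteq> N"
  shows "g (X \<union> Z) - g Z \<le> g (X \<union> Y) - g Y"
proof -
  have "g (X \<union> Y \<union> Z) + g ((X \<union> Y) \<inter> Z) \<le> g (X \<union> Y) + g Z" using assms by (intro submodular) auto
  moreover have "g Y \<le> g ((X \<union> Y) \<inter> Z)" using assms by (intro mono) auto
  moreover have "X \<union> Y \<union> Z = X \<union> Z" using assms by auto
  ultimately show ?thesis by simp
qed

lemma additive_subset:
  assumes "g (S \<union> B) = g S + g B" "M \<subseteq> S" "S \<subseteq> N" "B \<subseteq> N"
  shows "g (M \<union> B) = g M + g B"
proof -
  have "g (S \<union> B) - g S \<le> g (M \<union> B) - g M"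
    using diminishing_returns[of B M S] assms by (simp add: Un_commute)
  moreover have "g (M \<union> B) \<le> g M + g B" using assms by (intro subadditive) auto
  ultimately show ?thesis using assms(1) by linarith
qed

lemma sum_singletons_subset:
  assumes "finite W" "W \<subseteq> N" "g W = (\<Sum>i\<in>W. g {i})" "V \<subseteq> W"
  shows "g V = (\<Sum>i\<in>V. g {i})"
proof -
  have "V \<union> (W - V) = W" using assms(4) by auto
  then have "g W \<le> g V + g (W - V)" using subadditive[of V "W - V"] assms by auto
  moreover have "g (W - V) \<le> (\<Sum>i\<in>W - V. g {i})" "g V \<le> (\<Sum>i\<in>V. g {i})"
    using assms finite_subset[OF assms(4)] by (auto intro!: le_sum_singletons)
  moreover have "(\<Sum>i\<in>W. g {i}) = (\<Sum>i\<in>V. g {i}) + (\<Sum>i\<in>W - V. g {i})"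
    using sum.subset_diff[OF assms(4,1), of "\<lambda>i. g {i}"] by simp
  ultimately show ?thesis using assms(3) by linarith
qed

end

lemma polymatroid_scale: "polymatroid N h \<Longrightarrow> 0 < c \<Longrightarrow> polymatroid N (\<lambda>A. c * h A)"
  unfolding polymatroid_def by (auto simp: distrib_left[symmetric])

text \<open>\<open>determined_by g X Z\<close> is the vanishing of the conditional rank \<open>g(X | Z)\<close>; for an
  entropy function it says that the variables in \<open>Z\<close> determine those in \<open>X\<close>.\<close>

definition determined_by :: "('i set \<Rightarrow> real) \<Rightarrow> 'i set \<Rightarrow> 'i set \<Rightarrow> bool" where
  "determined_by g X Z \<longleftrightarrow> g (X \<union> Z) = g Z"

lemma determined_by_subset: "X \<subseteq> Z \<Longrightarrow> determined_by g X Z"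
  by (simp add: determined_by_def Un_absorb1)

context polymatroid
begin

lemma determined_by_iff: "X \<subseteq> N \<Longrightarrow> Z \<subseteq> N \<Longrightarrow> determined_by g X Z \<longleftrightarrow> g (X \<union> Z) \<le> g Z"
  using mono[of Z "X \<union> Z"] by (auto simp: determined_by_def)

lemma determined_by_mono:
  assumes "determined_by g X Y" "Y \<subseteq> Z" "X \<subseteq> N" "Z \<subseteq> N"
  shows "determined_by g X Z"
  using diminishing_returns[of X Y Z] assms unfolding determined_by_iff[OF assms(3,4)]
  by (simp add: determined_by_def)

lemma determined_by_antimono:
  assumes "determined_by g X Z" "X' \<subseteq> X" "X \<subseteq> N" "Z \<subseteq> N"
  shows "determined_by g X' Z"
  using mono[of "X' \<union> Z" "X \<union> Z"] assms unfolding determined_by_iff[OF subset_trans[OF assms(2,3)] assms(4)]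
  by (auto simp: determined_by_def)

lemma determined_by_Un:
  assumes "determined_by g X1 Z" "determined_by g X2 Z" "X1 \<subseteq> N" "X2 \<subseteq> N" "Z \<subseteq> N"
  shows "determined_by g (X1 \<union> X2) Z"
proof -
  have "g (X2 \<union> (X1 \<union> Z)) - g (X1 \<union> Z) \<le> g (X2 \<union> Z) - g Z"
    using assms by (intro diminishing_returns) auto
  moreover have "X1 \<union> X2 \<subseteq> N" using assms by auto
  ultimately show ?thesis using assms unfolding determined_by_iff[OF \<open>X1 \<union> X2 \<subseteq> N\<close> assms(5)]
    by (simp add: determined_by_def Un_ac)
qed

lemma determined_by_trans:
  assumes "determined_by g X Y" "determined_by g Y Z" "X \<subseteq> N" "Y \<subseteq> N" "Z \<subseteq> N"
  shows "determined_by g X Z"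
proof -
  have "g (X \<union> (Y \<union> Z)) - g (Y \<union> Z) \<le> g (X \<union> Y) - g Y"
    using assms by (intro diminishing_returns) auto
  moreover have "g (X \<union> Z) \<le> g (X \<union> (Y \<union> Z))" using assms by (intro mono) auto
  ultimately show ?thesis using assms unfolding determined_by_iff[OF assms(3,5)]
    by (simp add: determined_by_def Un_ac)
qed

lemma determined_by_singletons:
  assumes "finite W" "\<And>i. i \<in> W \<Longrightarrow> determined_by g {i} Z" "W \<subseteq> N" "Z \<subseteq> N"
  shows "determined_by g W Z"
  using assms
proof (induction W rule: finite_induct)
  case (insert x W)
  then show ?case using determined_by_Un[of "{x}" Z W] by simp
qed (simp add: determined_by_subset)

end

lemma polymatroid_if_entropic_on:
  assumes "finite N" "entropic_on N h" shows "polymatroid N h"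
proof -
  obtain Q where Q: "\<forall>i\<in>N. finite (SP Q i)" "\<forall>A. A \<subseteq> N \<longrightarrow> h A = jent Q A"
    using assms(2) by (auto simp: entropic_on_def)
  have fin: "finite B" if "B \<subseteq> N" for B using assms(1) that by (rule finite_subset[rotated])
  show ?thesis
  proof
    show "h {} = 0" using Q(2) by (simp add: jent_empty)
    show "h A \<le> h B" if "A \<subseteq> B" "B \<subseteq> N" for A B
      using that Q fin[of B] jent_mono[of B Q A] by auto
    show "h (A \<union> B) + h (A \<inter> B) \<le> h A + h B" if "A \<subseteq> N" "B \<subseteq> N" for A B
      using that Q jent_submodular[of A B Q] fin[of "A \<union> B"] by (auto simp: le_infI1)
  qed
qed

lemma polymatroid_if_weakly_entropic_on:
  assumes "finite N" "weakly_entropic_on N h" shows "polymatroid N h"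
proof -
  obtain c where c: "c > 0" "entropic_on N (\<lambda>A. c * h A)"
    using assms(2) by (auto simp: weakly_entropic_on_def)
  have "polymatroid N (\<lambda>A. inverse c * (c * h A))"
    using c by (intro polymatroid_scale polymatroid_if_entropic_on[OF assms(1)]) auto
  then show ?thesis using c(1) by (simp add: field_simps)
qed

lemma polymatroid_if_almost_entropic_on:
  assumes "finite N" "almost_entropic_on N h" shows "polymatroid N h"
proof -
  obtain hs where hs: "\<And>n. weakly_entropic_on N (hs n)" "\<And>A. A \<subseteq> N \<Longrightarrow> (\<lambda>n. hs n A) \<longlonglongrightarrow> h A"
    using assms(2) by (auto simp: almost_entropic_on_def)
  have pm: "polymatroid N (hs n)" for n by (rule polymatroid_if_weakly_entropic_on[OF assms(1) hs(1)])
  show ?thesis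
  proof
    show "h {} = 0"
      using LIMSEQ_unique[OF hs(2)[of "{}"]] pm by (simp add: polymatroid_def)
    show "h A \<le> h B" if "A \<subseteq> B" "B \<subseteq> N" for A B
      by (rule LIMSEQ_le[OF hs(2) hs(2)]) (use that pm in \<open>auto simp: polymatroid_def\<close>)
    show "h (A \<union> B) + h (A \<inter> B) \<le> h A + h B" if "A \<subseteq> N" "B \<subseteq> N" for A B
    proof (rule LIMSEQ_le)
      show "(\<lambda>n. hs n (A \<union> B) + hs n (A \<inter> B)) \<longlonglongrightarrow> h (A \<union> B) + h (A \<inter> B)"
        "(\<lambda>n. hs n A + hs n B) \<longlonglongrightarrow> h A + h B"
        using that by (intro tendsto_add hs(2); auto)+
    qed (use that pm in \<open>auto simp: polymatroid_def\<close>)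
  qed
qed

lemma almost_entropic_on_scale:
  assumes "almost_entropic_on N h" "c > 0" shows "almost_entropic_on N (\<lambda>A. c * h A)"
proof -
  obtain hs where hs: "\<And>n. weakly_entropic_on N (hs n)" "\<And>A. A \<subseteq> N \<Longrightarrow> (\<lambda>n. hs n A) \<longlonglongrightarrow> h A"
    using assms(1) by (auto simp: almost_entropic_on_def)
  have "weakly_entropic_on N (\<lambda>A. c * hs n A)" for n
  proof -
    obtain d where d: "d > 0" "entropic_on N (\<lambda>A. d * hs n A)"
      using hs(1)[of n] by (auto simp: weakly_entropic_on_def)
    have "entropic_on N (\<lambda>A. (d / c) * (c * hs n A))" using d assms(2) by simp
    then show ?thesis unfolding weakly_entropic_on_def using d assms(2) by (intro exI[of _ "d / c"]) auto
  qed
  moreover have "\<And>A. A \<subseteq> N \<Longrightarrow> (\<lambda>n. c * hs n A) \<longlonglongrightarrow> c * h A" by (intro tendsto_mult_left hs(2))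
  ultimately show ?thesis unfolding almost_entropic_on_def by (intro exI[of _ "\<lambda>n A. c * hs n A"]) auto
qed

text \<open>Almost entropic functions are closed under limits: a diagonal sequence of weakly
  entropic approximants, with error \<open>1/(n+1)\<close> uniformly on the finitely many subsets.\<close>

lemma almost_entropic_on_limit:
  assumes finN: "finite N" and G: "\<And>n. almost_entropic_on N (G n)"
    and lim: "\<And>A. A \<subseteq> N \<Longrightarrow> (\<lambda>n. G n A) \<longlonglongrightarrow> g A"
  shows "almost_entropic_on N g"
proof -
  have "\<exists>hs. (\<forall>k. weakly_entropic_on N (hs k)) \<and> (\<forall>A. A \<subseteq> N \<longrightarrow> (\<lambda>k. hs k A) \<longlonglongrightarrow> G n A)" for n
    using G[of n] by (simp add: almost_entropic_on_def)
  then obtain hs where hs: "\<And>n k. weakly_entropic_on N (hs n k)"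
    "\<And>n A. A \<subseteq> N \<Longrightarrow> (\<lambda>k. hs n k A) \<longlonglongrightarrow> G n A"
    by metis
  have "\<exists>k. \<forall>A\<in>Pow N. \<bar>hs n k A - G n A\<bar> < inverse (real (Suc n))" for n
  proof -
    have "\<forall>A\<in>Pow N. eventually (\<lambda>k. dist (hs n k A) (G n A) < inverse (real (Suc n))) sequentially"
      using hs(2) by (auto intro!: tendstoD)
    then have "eventually (\<lambda>k. \<forall>A\<in>Pow N. dist (hs n k A) (G n A) < inverse (real (Suc n))) sequentially"
      using finN by (intro eventually_ball_finite) auto
    then obtain k where "\<forall>A\<in>Pow N. dist (hs n k A) (G n A) < inverse (real (Suc n))"
      by (auto simp: eventually_sequentially)
    then show ?thesis by (auto simp: dist_real_def)
  qed
  then obtain k where k: "\<And>n A. A \<in> Pow N \<Longrightarrow> \<bar>hs n (k n) A - G n A\<bar> < inverse (real (Suc n))"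
    by metis
  have "(\<lambda>n. hs n (k n) A) \<longlonglongrightarrow> g A" if A: "A \<subseteq> N" for A
  proof -
    have "(\<lambda>n. hs n (k n) A - G n A) \<longlonglongrightarrow> 0"
    proof (rule Lim_null_comparison)
      show "\<forall>\<^sub>F n in sequentially. norm (hs n (k n) A - G n A) \<le> inverse (real (Suc n))"
        using k[of A] A by (auto intro!: less_imp_le always_eventually)
    qed (rule LIMSEQ_inverse_real_of_nat)
    then have "(\<lambda>n. (hs n (k n) A - G n A) + G n A) \<longlonglongrightarrow> 0 + g A" by (intro tendsto_add lim A)
    then show ?thesis by simp
  qed
  then show ?thesis unfolding almost_entropic_on_def using hs(1)
    by (intro exI[of _ "\<lambda>n. hs n (k n)"]) auto
qed

lemma jent_relabel:
  assumes "inj \<rho>"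
  shows "jent (map_pmf (\<lambda>y. y \<circ> \<rho>) Q) A = jent Q (\<rho> ` A)"
proof -
  have eq: "rst A (y \<circ> \<rho>) = (rst (\<rho> ` A) y) \<circ> \<rho>" for y
    using assms by (auto simp: rst_def fun_eq_iff inj_image_mem_iff)
  have "map_pmf (rst A) (map_pmf (\<lambda>y. y \<circ> \<rho>) Q) = map_pmf (\<lambda>z. z \<circ> \<rho>) (map_pmf (rst (\<rho> ` A)) Q)"
    by (simp add: pmf.map_comp comp_def eq[unfolded comp_def])
  moreover have "inj_on (\<lambda>z. z \<circ> \<rho>) (set_pmf (map_pmf (rst (\<rho> ` A)) Q))"
  proof (rule inj_onI)
    fix z z' assume z: "z \<in> set_pmf (map_pmf (rst (\<rho> ` A)) Q)" and z': "z' \<in> set_pmf (map_pmf (rst (\<rho> ` A)) Q)"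
      and e: "z \<circ> \<rho> = z' \<circ> \<rho>"
    show "z = z'"
    proof
      fix i
      show "z i = z' i"
      proof (cases "i \<in> \<rho> ` A")
        case True
        then obtain a where "i = \<rho> a" by auto
        then show ?thesis using e by (metis comp_apply)
      next
        case False
        then show ?thesis using z z' by (auto simp: rst_def)
      qed
    qed
  qed
  ultimately show ?thesis by (simp add: jent_def ent_map_pmf_inj)
qed

lemma SP_relabel: "SP (map_pmf (\<lambda>y. y \<circ> \<rho>) Q) i = SP Q (\<rho> i)"
  by (simp add: SP_def marg_def pmf.map_comp comp_def)

lemma almost_entropic_on_relabel:
  assumes "inj \<rho>" "almost_entropic_on N' g" "\<rho> ` N \<subseteq> N'"
  shows "almost_entropic_on N (\<lambda>A. g (\<rho> ` A))"
proof -
  obtain hs where hs: "\<And>n. weakly_entropic_on N' (hs n)" "\<And>A. A \<subseteq> N' \<Longrightarrow> (\<lambda>n. hs n A) \<longlonglongrightarrow> g A"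
    using assms(2) by (auto simp: almost_entropic_on_def)
  have "weakly_entropic_on N (\<lambda>A. hs n (\<rho> ` A))" for n
  proof -
    obtain c Q where c: "c > 0" "\<forall>i\<in>N'. finite (SP Q i)" "\<forall>A. A \<subseteq> N' \<longrightarrow> c * hs n A = jent Q A"
      using hs(1)[of n] by (auto simp: weakly_entropic_on_def entropic_on_def)
    have "entropic_on N (\<lambda>A. c * hs n (\<rho> ` A))"
      unfolding entropic_on_def
    proof (intro exI[of _ "map_pmf (\<lambda>y. y \<circ> \<rho>) Q"] conjI allI ballI impI)
      show "finite (SP (map_pmf (\<lambda>y. y \<circ> \<rho>) Q) i)" if "i \<in> N" for i
        using c(2) assms(3) that by (auto simp: SP_relabel)
      show "c * hs n (\<rho> ` A) = jent (map_pmf (\<lambda>y. y \<circ> \<rho>) Q) A" if "A \<subseteq> N" for A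
      proof -
        have "\<rho> ` A \<subseteq> N'" using that assms(3) by auto
        then show ?thesis using c(3) by (simp add: jent_relabel[OF assms(1)])
      qed
    qed
    then show ?thesis unfolding weakly_entropic_on_def using c(1) by auto
  qed
  moreover have "\<And>A. A \<subseteq> N \<Longrightarrow> (\<lambda>n. hs n (\<rho> ` A)) \<longlonglongrightarrow> g (\<rho> ` A)"
    using assms(3) by (intro hs(2)) auto
  ultimately show ?thesis unfolding almost_entropic_on_def by (intro exI[of _ "\<lambda>n A. hs n (\<rho> ` A)"]) auto
qed

lemma convergent_subseq_finite_family:
  fixes f :: "nat \<Rightarrow> 'a \<Rightarrow> real"
  assumes "finite F" "\<And>A n. A \<in> F \<Longrightarrow> \<bar>f n A\<bar> \<le> K A"
  shows "\<exists>r. strict_mono r \<and> (\<forall>A\<in>F. convergent (\<lambda>n. f (r n) A))"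
  using assms
proof (induction F rule: finite_induct)
  case empty
  then show ?case by (intro exI[of _ id]) (auto simp: strict_mono_def)
next
  case (insert A F)
  then obtain r where r: "strict_mono r" "\<forall>B\<in>F. convergent (\<lambda>n. f (r n) B)" by auto
  obtain r' where r': "strict_mono r'" "monoseq (\<lambda>n. f (r (r' n)) A)"
    using seq_monosub[of "\<lambda>n. f (r n) A"] by (auto simp: o_def)
  have "Bseq (\<lambda>n. f (r (r' n)) A)" using insert.prems[of A] by (intro BseqI'[where K = "K A"]) auto
  then have "convergent (\<lambda>n. f (r (r' n)) A)" using r'(2) Bseq_monoseq_convergent by blast
  moreover have "convergent (\<lambda>n. f (r (r' n)) B)" if "B \<in> F" for B
    using convergent_subseq_convergent[OF bspec[OF r(2) that] r'(1)] by (simp add: o_def)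
  ultimately show ?case using r r' strict_mono_o[of r r'] by (intro exI[of _ "r \<circ> r'"]) (auto simp: comp_def)
qed

lemma in_link_subset_idx: "in_link P e \<subseteq> idx P"
  by (auto simp: in_link_def idx_def)

lemma in_node_subset_idx: "in_node P u \<subseteq> idx P"
  by (auto simp: in_node_def idx_def)

lemma constraints_scale:
  assumes "h \<in> C_I P \<inter> C_T P \<inter> C_D P"
  shows "(\<lambda>A. c * h A) \<in> C_I P \<inter> C_T P \<inter> C_D P"
  using assms by (simp add: C_I_def C_T_def C_D_def sum_distrib_left flip: right_diff_distrib)

lemma constraints_limit:
  assumes G: "\<And>n. G n \<in> C_I P \<inter> C_T P \<inter> C_D P"
    and lim: "\<And>A. A \<subseteq> idx P \<Longrightarrow> (\<lambda>n. G n A) \<longlonglongrightarrow> g A"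
  shows "g \<in> C_I P \<inter> C_T P \<inter> C_D P"
proof -
  have diff_zero: "g X - g Y = 0" if "X \<subseteq> idx P" "Y \<subseteq> idx P" "\<And>n. G n X - G n Y = 0" for X Y
  proof -
    have "(\<lambda>n. G n X - G n Y) \<longlonglongrightarrow> g X - g Y" using that by (intro tendsto_diff lim)
    then show ?thesis by (simp add: that(3) LIMSEQ_const_iff)
  qed
  have "(\<lambda>n. G n (Inl ` srcs P)) \<longlonglongrightarrow> (\<Sum>s\<in>srcs P. g {Inl s})"
    using G by (simp add: C_I_def) (intro tendsto_sum lim, auto simp: idx_def)
  then have "g \<in> C_I P"
    using LIMSEQ_unique lim[of "Inl ` srcs P"] by (auto simp: C_I_def idx_def)
  moreover have "g \<in> C_T P"
    unfolding C_T_def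
  proof (intro CollectI ballI)
    fix e assume "e \<in> links P"
    then show "g (in_link P e \<union> {Inr e}) - g (in_link P e) = 0"
      using G in_link_subset_idx[of P e] by (intro diff_zero) (auto simp: C_T_def idx_def)
  qed
  moreover have "g \<in> C_D P"
    unfolding C_D_def
  proof (intro CollectI ballI)
    fix s u assume "s \<in> srcs P" "u \<in> dest P s"
    then show "g ({Inl s} \<union> in_node P u) - g (in_node P u) = 0"
      using G in_node_subset_idx[of P u] by (intro diff_zero) (auto simp: C_D_def idx_def)
  qed
  ultimately show ?thesis by blast
qed

lemma polymatroid_seq_convergent_subseq:
  assumes fin: "finite N" and pm: "\<And>n. polymatroid N (G n)"
    and singletons: "\<And>i. i \<in> N \<Longrightarrow> convergent (\<lambda>n. G n {i})"
  shows "\<exists>r g. strict_mono r \<and> (\<forall>A. A \<subseteq> N \<longrightarrow> (\<lambda>n. G (r n) A) \<longlonglongrightarrow> g A)"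
proof -
  have "\<exists>K. \<forall>n. \<bar>G n {i}\<bar> \<le> K" if "i \<in> N" for i
    using convergent_imp_Bseq[OF singletons[OF that]] by (auto simp: Bseq_def)
  then have "\<exists>K. \<forall>i\<in>N. \<forall>n. \<bar>G n {i}\<bar> \<le> K i" by (intro bchoice ballI)
  then obtain K where K: "\<forall>i\<in>N. \<forall>n. \<bar>G n {i}\<bar> \<le> K i" ..
  have "\<bar>G n A\<bar> \<le> (\<Sum>i\<in>N. K i)" if "A \<in> Pow N" for n A
  proof -
    have "G n A \<le> G n N" using that polymatroid.mono[OF pm] by auto
    also have "\<dots> \<le> (\<Sum>i\<in>N. G n {i})" using fin polymatroid.le_sum_singletons[OF pm] by auto
    also have "\<dots> \<le> (\<Sum>i\<in>N. K i)" using K by (intro sum_mono) (auto simp: abs_le_iff)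
    finally show ?thesis using polymatroid.nonneg[OF pm] that by auto
  qed
  then have "\<exists>r. strict_mono r \<and> (\<forall>A\<in>Pow N. convergent (\<lambda>n. G (r n) A))"
    using convergent_subseq_finite_family[of "Pow N" G "\<lambda>_. \<Sum>i\<in>N. K i"] fin by auto
  then obtain r where "strict_mono r" "\<forall>A\<in>Pow N. convergent (\<lambda>n. G (r n) A)" by blast
  then show ?thesis
    by (intro exI[of _ r] exI[of _ "\<lambda>A. lim (\<lambda>n. G (r n) A)"]) (auto simp: convergent_LIMSEQ_iff)
qed

text \<open>The closure operator \<open>CL\<close> adds nothing for almost entropic functions: after rescaling,
  the approximating functions are polymatroids whose ranks of singletons converge, so a
  subsequence converges to an almost entropic function meeting the rate and capacity bounds.\<close>

lemma outer_bound_attained: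
  assumes fin: "finite (idx P)" and t: "t \<in> outer_bound P"
  obtains g where "almost_entropic_on (idx P) g" "g \<in> C_I P \<inter> C_T P \<inter> C_D P"
    "\<And>e. e \<in> links P \<Longrightarrow> g {Inr e} \<le> snd t e" "\<And>s. s \<in> srcs P \<Longrightarrow> fst t s \<le> g {Inl s}"
proof -
  define N where "N = idx P"
  obtain ts c where ts: "\<And>n. ts n \<in> proj P ` (Gamma_bar P \<inter> C_I P \<inter> C_T P \<inter> C_D P)"
    and cpos: "\<And>n. c n > 0"
    and links: "\<And>e. e \<in> links P \<Longrightarrow> \<exists>L. (\<lambda>n. c n * snd (ts n) e) \<longlonglongrightarrow> L \<and> L \<le> snd t e"
    and srcs: "\<And>s. s \<in> srcs P \<Longrightarrow> \<exists>L. (\<lambda>n. c n * fst (ts n) s) \<longlonglongrightarrow> L \<and> fst t s \<le> L"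
    using t unfolding outer_bound_def CL_def by blast
  have "\<forall>n. \<exists>h. ts n = proj P h \<and> h \<in> Gamma_bar P \<inter> C_I P \<inter> C_T P \<inter> C_D P"
    using ts by blast
  from choice[OF this] obtain H where H: "\<And>n. ts n = proj P (H n)"
    "\<And>n. H n \<in> Gamma_bar P \<inter> C_I P \<inter> C_T P \<inter> C_D P"
    by blast
  define G where "G n = (\<lambda>A. c n * H n A)" for n
  have G_ae: "almost_entropic_on N (G n)" for n
    using H(2)[of n] cpos[of n] unfolding G_def
    by (intro almost_entropic_on_scale) (auto simp: Gamma_bar_def N_def)
  have "\<exists>L. (\<lambda>n. G n {i}) \<longlonglongrightarrow> L \<and> (\<forall>e. i = Inr e \<longrightarrow> L \<le> snd t e)
        \<and> (\<forall>s. i = Inl s \<longrightarrow> fst t s \<le> L)" if "i \<in> N" for i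
    using that links srcs by (cases i) (auto simp: N_def idx_def G_def H(1) proj_def)
  then have "\<exists>L. \<forall>i\<in>N. (\<lambda>n. G n {i}) \<longlonglongrightarrow> L i \<and> (\<forall>e. i = Inr e \<longrightarrow> L i \<le> snd t e)
        \<and> (\<forall>s. i = Inl s \<longrightarrow> fst t s \<le> L i)" by (intro bchoice ballI)
  then obtain L where L: "\<forall>i\<in>N. (\<lambda>n. G n {i}) \<longlonglongrightarrow> L i \<and> (\<forall>e. i = Inr e \<longrightarrow> L i \<le> snd t e)
        \<and> (\<forall>s. i = Inl s \<longrightarrow> fst t s \<le> L i)" ..
  have "\<exists>r g. strict_mono r \<and> (\<forall>A. A \<subseteq> N \<longrightarrow> (\<lambda>n. G (r n) A) \<longlonglongrightarrow> g A)"
    using L fin polymatroid_if_almost_entropic_on[OF _ G_ae]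
    by (intro polymatroid_seq_convergent_subseq) (auto simp: N_def convergent_def)
  then obtain r g where r: "strict_mono r" and g: "\<And>A. A \<subseteq> N \<Longrightarrow> (\<lambda>n. G (r n) A) \<longlonglongrightarrow> g A"
    by blast
  have "g {i} = L i" if "i \<in> N" for i
  proof -
    have "(\<lambda>n. G (r n) {i}) \<longlonglongrightarrow> L i"
      using LIMSEQ_subseq_LIMSEQ[of "\<lambda>n. G n {i}" "L i" r] L that r by (simp add: o_def)
    then show ?thesis using g[of "{i}"] that LIMSEQ_unique by blast
  qed
  moreover have "almost_entropic_on N g"
    using almost_entropic_on_limit[OF _ G_ae g] fin by (simp add: N_def)
  moreover have "g \<in> C_I P \<inter> C_T P \<inter> C_D P"
    using H(2) constraints_scale by (intro constraints_limit[OF _ g]) (auto simp: G_def N_def)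
  moreover have "L (Inr e) \<le> snd t e" if "e \<in> links P" for e
    using bspec[OF L, of "Inr e"] that by (simp add: N_def idx_def)
  moreover have "fst t s \<le> L (Inl s)" if "s \<in> srcs P" for s
    using bspec[OF L, of "Inl s"] that by (simp add: N_def idx_def)
  ultimately show ?thesis by (intro that) (auto simp: N_def idx_def)
qed

lemma Pdag_simps [simp]:
  "srcs (Pdag P) = {Src1, Src2}"
  "ltail (Pdag P) = dtail P"
  "lhead (Pdag P) = dhead P"
  "orig (Pdag P) = (\<lambda>_. {Phi})"
  by (simp_all add: Pdag_def)

lemma links_Pdag_iff [simp]:
  "OldL e \<in> links (Pdag P) \<longleftrightarrow> e \<in> links P"
  "La s \<in> links (Pdag P) \<longleftrightarrow> s \<in> srcs P"
  "Lb s \<in> links (Pdag P) \<longleftrightarrow> s \<in> srcs P"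
  "Lc s \<in> links (Pdag P) \<longleftrightarrow> s \<in> srcs P"
  "Ld s u \<in> links (Pdag P) \<longleftrightarrow> s \<in> srcs P \<and> u \<in> dest P s"
  by (auto simp: Pdag_def)

lemma dest_Pdag:
  "dest (Pdag P) Src1 = {Tau s u | s u. s \<in> srcs P \<and> u \<in> dest P s} \<union> {Eta, EtaStar, Psi}"
  "dest (Pdag P) Src2 = {Eta, EtaStar}"
  by (simp_all add: Pdag_def)

lemma idx_Pdag_iff [simp]:
  "Inl x \<in> idx (Pdag P)"
  "Inr lk \<in> idx (Pdag P) \<longleftrightarrow> lk \<in> links (Pdag P)"
  by (cases x; auto simp: idx_def)+

lemma finite_links_Pdag:
  assumes "valid_problem P" shows "finite (links (Pdag P))"
proof -
  have "finite (dest P s)" if "s \<in> srcs P" for s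
    using assms that by (meson finite_subset valid_problem_def)
  then have "finite (SIGMA s:srcs P. dest P s)"
    using assms by (auto simp: valid_problem_def intro!: finite_SigmaI)
  then have "finite {Ld s u |s u. s \<in> srcs P \<and> u \<in> dest P s}"
    by (rule finite_subset[rotated, OF finite_imageI[of _ "\<lambda>(s, u). Ld s u"]]) auto
  then show ?thesis using assms by (simp add: valid_problem_def Pdag_def)
qed

lemma finite_idx_Pdag:
  assumes "valid_problem P" shows "finite (idx (Pdag P))"
  using finite_links_Pdag[OF assms] by (simp add: idx_def)

lemma in_link_Pdag:
  "in_link (Pdag P) (La s) = {Inl Src1, Inl Src2}"
  "in_link (Pdag P) (Lb s) = {Inl Src1, Inl Src2}"
  "s \<in> srcs P \<Longrightarrow> in_link (Pdag P) (Lc s) = {Inr (La s), Inr (Lb s)}"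
  "in_link (Pdag P) (OldL e) = in_node (Pdag P) (OldN (ltail P e))"
  "in_link (Pdag P) (Ld s u) = in_node (Pdag P) (OldN u)"
  unfolding in_link_def in_node_def by (auto simp: Pdag_def elim!: dtail.elims dhead.elims)

lemma in_node_Pdag:
  "in_node (Pdag P) (OldN u) =
     Inr ` La ` {j\<in>srcs P. u \<in> orig P j} \<union> Inr ` OldL ` {f\<in>links P. u \<in> lhead P f}"
  "in_node (Pdag P) Psi = Inr ` Lb ` srcs P"
  "in_node (Pdag P) Eta = Inr ` Lb ` srcs P \<union> Inr ` Lc ` srcs P"
  "in_node (Pdag P) EtaStar = Inr ` La ` srcs P \<union> Inr ` Lc ` srcs P"
  "s \<in> srcs P \<Longrightarrow> u \<in> dest P s \<Longrightarrow>
     in_node (Pdag P) (Tau s u) = Inr ` Lb ` (srcs P - {s}) \<union> {Inr (Lc s), Inr (Ld s u)}"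
  unfolding in_node_def by (auto simp: Pdag_def elim!: dhead.elims)

lemma sum_image_Inr:
  "inj f \<Longrightarrow> (\<Sum>i\<in>Inr ` f ` S. h i) = (\<Sum>s\<in>S. h (Inr (f s)))"
  by (simp add: sum.reindex inj_on_def image_image)

text \<open>Source \<open>s\<close> of \<open>P\<close> travels on the link \<open>a\<^sub>s\<close> of \<open>P\<^sup>\<dagger>\<close>.\<close>

definition embed_idx :: "'s + 'e \<Rightarrow> dsrc + ('v, 's, 'e) dlink" where
  "embed_idx = case_sum (\<lambda>s. Inr (La s)) (\<lambda>e. Inr (OldL e))"

lemma embed_idx_simps [simp]:
  "embed_idx (Inl s) = Inr (La s)" "embed_idx (Inr e) = Inr (OldL e)"
  by (simp_all add: embed_idx_def)

lemma inj_embed_idx: "inj embed_idx"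
  by (auto simp: inj_def embed_idx_def split: sum.splits)

lemma embed_idx_in_node: "embed_idx ` in_node P u = in_node (Pdag P) (OldN u)"
proof -
  have "in_node P u = Inl ` {j\<in>srcs P. u \<in> orig P j} \<union> Inr ` {f\<in>links P. u \<in> lhead P f}"
    by (auto simp: in_node_def)
  then show ?thesis by (simp add: in_node_Pdag image_Un image_image embed_idx_def)
qed

lemma embed_idx_in_link: "embed_idx ` in_link P e = in_link (Pdag P) (OldL e)"
proof -
  have "in_link P e = in_node P (ltail P e)" by (simp add: in_link_def in_node_def)
  then show ?thesis by (simp add: embed_idx_in_node in_link_Pdag)
qed

lemma wf_node_rel:
  assumes "valid_problem P" shows "wf (node_rel P)"
proof (rule finite_acyclic_wf)
  have "node_rel P \<subseteq> nodes P \<times> nodes P"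
    using assms by (auto simp: node_rel_def valid_problem_def)
  then show "finite (node_rel P)" using assms finite_subset by (auto simp: valid_problem_def)
qed (use assms in \<open>simp add: valid_problem_def\<close>)

lemma eq_if_sum_le_sum:
  fixes f h :: "'a \<Rightarrow> real"
  assumes "finite I" "\<And>i. i \<in> I \<Longrightarrow> f i \<le> h i" "sum h I \<le> sum f I" "i \<in> I"
  shows "f i = h i"
proof (rule ccontr)
  assume "f i \<noteq> h i"
  then have "sum f I < sum h I"
    using assms by (intro sum_strict_mono_ex1) (auto intro: order.not_eq_order_implies_strict)
  then show False using assms(3) by simp
qed

section \<open>Polymatroids on the two-layer problem\<close>

locale dagger_polymatroid = polymatroid "idx (Pdag P)" g
  for P :: "('v, 'e, 's) problem" and g :: "(dsrc + ('v, 's, 'e) dlink) set \<Rightarrow> real"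
    and l :: "'s \<Rightarrow> real" +
  assumes valid: "valid_problem P"
    and constraints: "g \<in> C_I (Pdag P) \<inter> C_T (Pdag P) \<inter> C_D (Pdag P)"
    and rate: "\<And>x. (\<Sum>s\<in>srcs P. l s) \<le> g {Inl x}"
    and cap: "\<And>s. s \<in> srcs P \<Longrightarrow> g {Inr (La s)} \<le> l s \<and> g {Inr (Lb s)} \<le> l s \<and> g {Inr (Lc s)} \<le> l s"
begin

abbreviation "total_rate \<equiv> \<Sum>s\<in>srcs P. l s"

abbreviation links_of :: "('s \<Rightarrow> ('v, 's, 'e) dlink) \<Rightarrow> (dsrc + ('v, 's, 'e) dlink) set" where
  "links_of f \<equiv> Inr ` f ` srcs P"

lemma finite_srcs: "finite (srcs P)"
  using valid by (simp add: valid_problem_def)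

lemma determined_by_in_link:
  "lk \<in> links (Pdag P) \<Longrightarrow> determined_by g {Inr lk} (in_link (Pdag P) lk)"
  using constraints by (auto simp: C_T_def determined_by_def Un_commute)

lemma determined_by_in_node:
  "u \<in> dest (Pdag P) x \<Longrightarrow> determined_by g {Inl x} (in_node (Pdag P) u)"
  using constraints by (cases x) (auto simp: C_D_def determined_by_def)

lemma rank_sources: "g {Inl Src1, Inl Src2} = g {Inl Src1} + g {Inl Src2}"
proof -
  have "Inl ` srcs (Pdag P) = {Inl Src1, Inl Src2}" by auto
  then show ?thesis using constraints by (simp add: C_I_def)
qed

lemma rank_links_of_le:
  assumes "f \<in> {La, Lb, Lc}"
  shows "g (links_of f) \<le> (\<Sum>s\<in>srcs P. g {Inr (f s)})" "(\<Sum>s\<in>srcs P. g {Inr (f s)}) \<le> total_rate"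
proof -
  have "inj f" using assms by (auto simp: inj_def)
  moreover have "links_of f \<subseteq> idx (Pdag P)" using assms by auto
  ultimately show "g (links_of f) \<le> (\<Sum>s\<in>srcs P. g {Inr (f s)})"
    using le_sum_singletons[of "links_of f"] finite_srcs by (simp add: sum_image_Inr)
  show "(\<Sum>s\<in>srcs P. g {Inr (f s)}) \<le> total_rate"
    using cap assms by (intro sum_mono) auto
qed

lemma rank_Src1_and_Lb: "g {Inl Src1} = total_rate" "g (links_of Lb) = total_rate"
proof -
  have "determined_by g {Inl Src1} (links_of Lb)"
    using determined_by_in_node[of Psi Src1] by (simp add: dest_Pdag in_node_Pdag)
  moreover have "g {Inl Src1} \<le> g ({Inl Src1} \<union> links_of Lb)" by (intro mono) auto
  moreover have "g (links_of Lb) \<le> total_rate" using rank_links_of_le[of Lb] by simp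
  ultimately show "g {Inl Src1} = total_rate" "g (links_of Lb) = total_rate"
    using rate[of Src1] by (auto simp: determined_by_def)
qed

text \<open>Both sources are recovered at \<open>\<eta>\<^sup>*\<close> from the links \<open>a\<^sub>s, c\<^sub>s\<close>, whose total capacity
  is only \<open>2\<Lambda>\<close>; hence every inequality on the way is tight.\<close>

lemma tight_La_Lc:
  "(\<Sum>s\<in>srcs P. g {Inr (La s)}) = total_rate" "(\<Sum>s\<in>srcs P. g {Inr (Lc s)}) = total_rate"
  "g (links_of La) = total_rate" "g (links_of La \<union> links_of Lc) = 2 * total_rate"
  "g {Inl Src2} = total_rate"
proof -
  have "determined_by g {Inl x} (links_of La \<union> links_of Lc)" for x
    using determined_by_in_node[of EtaStar x] by (cases x) (auto simp: dest_Pdag in_node_Pdag)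
  then have "determined_by g ({Inl Src1} \<union> {Inl Src2}) (links_of La \<union> links_of Lc)"
    by (intro determined_by_Un) auto
  moreover have "g {Inl Src1, Inl Src2} \<le> g ({Inl Src1, Inl Src2} \<union> (links_of La \<union> links_of Lc))"
    by (intro mono) auto
  moreover have "g (links_of La \<union> links_of Lc) \<le> g (links_of La) + g (links_of Lc)"
    by (intro subadditive) auto
  ultimately show "(\<Sum>s\<in>srcs P. g {Inr (La s)}) = total_rate" "(\<Sum>s\<in>srcs P. g {Inr (Lc s)}) = total_rate"
    "g (links_of La) = total_rate" "g (links_of La \<union> links_of Lc) = 2 * total_rate"
    "g {Inl Src2} = total_rate"
    using rank_sources rank_Src1_and_Lb rank_links_of_le[of La] rank_links_of_le[of Lc] rate[of Src2]
    by (auto simp: determined_by_def insert_commute)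
qed

lemma rank_singletons:
  assumes "s \<in> srcs P"
  shows "g {Inr (La s)} = l s" "g {Inr (Lb s)} = l s" "g {Inr (Lc s)} = l s"
proof -
  have "(\<Sum>s\<in>srcs P. g {Inr (Lb s)}) = total_rate"
    using rank_links_of_le[of Lb] rank_Src1_and_Lb by simp
  then show "g {Inr (La s)} = l s" "g {Inr (Lb s)} = l s" "g {Inr (Lc s)} = l s"
    using tight_La_Lc cap assms
    by (auto intro!: eq_if_sum_le_sum[OF finite_srcs, where h = l])
qed

lemma rank_Lb_Lc:
  "g (links_of Lb \<union> links_of Lc) = (\<Sum>i\<in>links_of Lb \<union> links_of Lc. g {i})"
proof -
  have "determined_by g {Inl x} (links_of Lb \<union> links_of Lc)" for x
    using determined_by_in_node[of Eta x] by (cases x) (auto simp: dest_Pdag in_node_Pdag)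
  then have "determined_by g ({Inl Src1} \<union> {Inl Src2}) (links_of Lb \<union> links_of Lc)"
    by (intro determined_by_Un) auto
  moreover have "g {Inl Src1, Inl Src2} \<le> g ({Inl Src1, Inl Src2} \<union> (links_of Lb \<union> links_of Lc))"
    by (intro mono) auto
  moreover have "g (links_of Lb \<union> links_of Lc) \<le> (\<Sum>i\<in>links_of Lb \<union> links_of Lc. g {i})"
    using finite_srcs by (intro le_sum_singletons) auto
  moreover have "(\<Sum>i\<in>links_of Lb \<union> links_of Lc. g {i})
      = (\<Sum>s\<in>srcs P. g {Inr (Lb s)}) + (\<Sum>s\<in>srcs P. g {Inr (Lc s)})"
    using finite_srcs by (subst sum.union_disjoint) (auto simp: sum_image_Inr inj_def)
  ultimately show ?thesis
    using rank_sources rank_Src1_and_Lb tight_La_Lc rank_links_of_le[of Lb]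
    by (auto simp: determined_by_def insert_commute)
qed

end

context dagger_polymatroid
begin

lemma finite_if_subset_idx: "A \<subseteq> idx (Pdag P) \<Longrightarrow> finite A"
  using finite_idx_Pdag[OF valid] finite_subset by blast

lemma OldL_determined_by_La:
  assumes "e \<in> links P" shows "determined_by g {Inr (OldL e)} (links_of La)"
proof -
  have "\<forall>e\<in>links P. ltail P e = v \<longrightarrow> determined_by g {Inr (OldL e)} (links_of La)" for v
  proof (induction v rule: wf_induct_rule[OF wf_node_rel[OF valid]])
    case (1 v)
    show ?case
    proof (intro ballI impI)
      fix e assume e: "e \<in> links P" "ltail P e = v"
      let ?I = "in_link (Pdag P) (OldL e)"
      have I: "?I \<subseteq> idx (Pdag P)" by (rule in_link_subset_idx)
      have "determined_by g ?I (links_of La)"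
      proof (rule determined_by_singletons[OF finite_if_subset_idx[OF I] _ I])
        fix i assume "i \<in> ?I"
        then consider j where "j \<in> srcs P" "i = Inr (La j)"
          | f where "f \<in> links P" "v \<in> lhead P f" "i = Inr (OldL f)"
          using e by (auto simp: in_link_Pdag in_node_Pdag)
        then show "determined_by g {i} (links_of La)"
        proof cases
          case (2 f)
          then have "(ltail P f, v) \<in> node_rel P" unfolding node_rel_def by blast
          with 2 show ?thesis using 1 by blast
        qed (auto intro: determined_by_subset)
      qed auto
      moreover have "links_of La \<subseteq> idx (Pdag P)" by auto
      ultimately show "determined_by g {Inr (OldL e)} (links_of La)"
        using determined_by_in_link[of "OldL e"] e I determined_by_trans[of "{Inr (OldL e)}" ?I]
        by simp
    qed
  qed
  then show ?thesis using assms by blast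
qed

lemma in_node_OldN_determined_by_La: "determined_by g (in_node (Pdag P) (OldN u)) (links_of La)"
proof -
  let ?U = "in_node (Pdag P) (OldN u)"
  have U: "?U \<subseteq> idx (Pdag P)" by (rule in_node_subset_idx)
  show ?thesis
  proof (rule determined_by_singletons[OF finite_if_subset_idx[OF U] _ U])
    fix i assume "i \<in> ?U"
    then consider j where "j \<in> srcs P" "i = Inr (La j)" | f where "f \<in> links P" "i = Inr (OldL f)"
      by (auto simp: in_node_Pdag)
    then show "determined_by g {i} (links_of La)"
    proof cases
      case 1
      then show ?thesis by (simp add: determined_by_subset)
    next
      case 2
      then show ?thesis using OldL_determined_by_La by simp
    qed
  qed auto
qed

lemma La_determined_by_Lb_Lc:
  assumes s: "s \<in> srcs P"
  shows "determined_by g {Inr (La s)} {Inr (Lb s), Inr (Lc s)}"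
proof -
  have "links_of Lb \<union> links_of Lc \<subseteq> idx (Pdag P)" by auto
  then have "g {Inr (Lb s), Inr (Lc s)} = g {Inr (Lb s)} + g {Inr (Lc s)}"
    using sum_singletons_subset[OF _ _ rank_Lb_Lc, of "{Inr (Lb s), Inr (Lc s)}"] finite_srcs s
    by auto
  then have bc: "g {Inr (Lb s), Inr (Lc s)} = 2 * l s" using rank_singletons[OF s] by simp
  have "determined_by g {Inr (Lc s)} {Inr (La s), Inr (Lb s)}"
    using determined_by_in_link[of "Lc s"] s by (simp add: in_link_Pdag)
  then have "g {Inr (La s), Inr (Lb s), Inr (Lc s)} = g {Inr (La s), Inr (Lb s)}"
    by (simp add: determined_by_def insert_commute)
  also have "\<dots> \<le> g {Inr (La s)} + g {Inr (Lb s)}"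
    using subadditive[of "{Inr (La s)}" "{Inr (Lb s)}"] s by (simp add: insert_commute)
  finally show ?thesis using bc rank_singletons[OF s] s by (simp add: determined_by_iff insert_commute)
qed

definition tau_inputs :: "'s \<Rightarrow> (dsrc + ('v, 's, 'e) dlink) set" where
  "tau_inputs s = Inr ` Lb ` (srcs P - {s}) \<union> {Inr (Lc s)}"

lemma tau_inputs_subset_idx: "s \<in> srcs P \<Longrightarrow> tau_inputs s \<subseteq> idx (Pdag P)"
  by (auto simp: tau_inputs_def)

lemma rank_tau_inputs:
  assumes s: "s \<in> srcs P" shows "g (tau_inputs s) \<le> total_rate"
proof -
  have "g (tau_inputs s) \<le> (\<Sum>i\<in>tau_inputs s. g {i})"
    using finite_srcs s by (intro le_sum_singletons) (auto simp: tau_inputs_def)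
  also have "\<dots> = (\<Sum>j\<in>srcs P - {s}. g {Inr (Lb j)}) + g {Inr (Lc s)}"
  proof -
    have "tau_inputs s = insert (Inr (Lc s)) (Inr ` Lb ` (srcs P - {s}))"
      by (auto simp: tau_inputs_def)
    moreover have "(\<Sum>i\<in>insert (Inr (Lc s)) (Inr ` Lb ` (srcs P - {s})). g {i})
        = g {Inr (Lc s)} + (\<Sum>i\<in>Inr ` Lb ` (srcs P - {s}). g {i})"
      by (rule sum.insert) (use finite_srcs in auto)
    ultimately show ?thesis by (simp add: sum_image_Inr inj_def add.commute)
  qed
  also have "\<dots> = (\<Sum>j\<in>srcs P - {s}. l j) + l s"
    using rank_singletons s by simp
  also have "\<dots> = total_rate" using finite_srcs s by (simp add: sum_diff1)
  finally show ?thesis .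
qed

lemma rank_La_tau_inputs:
  assumes s: "s \<in> srcs P"
  shows "g (links_of La \<union> tau_inputs s) = g (links_of La) + g (tau_inputs s)"
proof -
  have "determined_by g (links_of Lc) (links_of La \<union> tau_inputs s)"
  proof (rule determined_by_singletons)
    fix i assume "i \<in> links_of Lc"
    then obtain j where j: "j \<in> srcs P" "i = Inr (Lc j)" by auto
    show "determined_by g {i} (links_of La \<union> tau_inputs s)"
    proof (cases "j = s")
      case False
      have "determined_by g {i} {Inr (La j), Inr (Lb j)}"
        using determined_by_in_link[of "Lc j"] j by (simp add: in_link_Pdag)
      then show ?thesis
        by (rule determined_by_mono) (use j False tau_inputs_subset_idx[OF s] in \<open>auto simp: tau_inputs_def\<close>)
    qed (use j in \<open>auto intro: determined_by_subset simp: tau_inputs_def\<close>)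
  qed (use finite_srcs tau_inputs_subset_idx[OF s] in auto)
  then have "g (links_of Lc \<union> (links_of La \<union> tau_inputs s)) = g (links_of La \<union> tau_inputs s)"
    by (simp add: determined_by_def)
  moreover have "g (links_of La \<union> links_of Lc) \<le> g (links_of Lc \<union> (links_of La \<union> tau_inputs s))"
    by (rule mono) (use tau_inputs_subset_idx[OF s] in auto)
  ultimately have "g (links_of La \<union> links_of Lc) \<le> g (links_of La \<union> tau_inputs s)" by simp
  moreover have "g (links_of La \<union> tau_inputs s) \<le> g (links_of La) + g (tau_inputs s)"
    using tau_inputs_subset_idx[OF s] by (intro subadditive) auto
  ultimately show ?thesis using tight_La_Lc rank_tau_inputs[OF s] by linarith
qed

lemma La_determined_by_tau_inputs_and_OldN:
  assumes s: "s \<in> srcs P" and u: "u \<in> dest P s"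
  shows "determined_by g {Inr (La s)} (tau_inputs s \<union> in_node (Pdag P) (OldN u))"
    (is "determined_by g _ ?Z")
proof -
  let ?T = "tau_inputs s \<union> {Inr (Ld s u)}"
  have Z: "?Z \<subseteq> idx (Pdag P)"
    using tau_inputs_subset_idx[OF s] in_node_subset_idx[of "Pdag P" "OldN u"] by blast
  have T: "?T \<subseteq> idx (Pdag P)" using tau_inputs_subset_idx[OF s] s u by auto
  have "determined_by g {Inr (Ld s u)} (in_node (Pdag P) (OldN u))"
    using determined_by_in_link[of "Ld s u"] s u by (simp add: in_link_Pdag)
  then have "determined_by g {Inr (Ld s u)} ?Z"
    by (rule determined_by_mono) (use Z s u in auto)
  moreover have "determined_by g (tau_inputs s) ?Z" by (rule determined_by_subset) auto
  ultimately have T_Z: "determined_by g ?T ?Z"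
    using Z s u tau_inputs_subset_idx[OF s] by (intro determined_by_Un) auto
  have Src1_T: "determined_by g {Inl Src1} ?T"
    using determined_by_in_node[of "Tau s u" Src1] s u
    by (auto simp: dest_Pdag in_node_Pdag tau_inputs_def insert_commute)
  have Lb_Src1: "determined_by g {Inr (Lb s)} {Inl Src1}"
  proof -
    have "determined_by g {Inl Src1} (links_of Lb)"
      using determined_by_in_node[of Psi Src1] by (simp add: dest_Pdag in_node_Pdag)
    then have "determined_by g (links_of Lb) {Inl Src1}"
      using rank_Src1_and_Lb by (simp add: determined_by_def Un_commute)
    then show ?thesis by (rule determined_by_antimono) (use s in auto)
  qed
  have "determined_by g {Inr (Lb s)} ?Z"
    using determined_by_trans[OF Src1_T T_Z] determined_by_trans[OF Lb_Src1] T Z s by simp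
  moreover have "determined_by g {Inr (Lc s)} ?Z" by (simp add: determined_by_subset tau_inputs_def)
  ultimately have "determined_by g ({Inr (Lb s)} \<union> {Inr (Lc s)}) ?Z"
    using Z s by (intro determined_by_Un) auto
  then show ?thesis
    using determined_by_trans[OF La_determined_by_Lb_Lc[OF s]] Z s by (simp add: insert_commute)
qed

text \<open>Since the links \<open>a\<^sub>j\<close> are independent of the side information \<open>tau_inputs s\<close> and
  determine everything entering the original node \<open>u\<close>, the side information cannot help to
  recover \<open>a\<^sub>s\<close> at \<open>u\<close>.\<close>

lemma La_determined_by_OldN:
  assumes s: "s \<in> srcs P" and u: "u \<in> dest P s"
  shows "determined_by g {Inr (La s)} (in_node (Pdag P) (OldN u))"
proof -
  let ?E = "tau_inputs s" and ?U = "in_node (Pdag P) (OldN u)"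
  have U: "?U \<subseteq> idx (Pdag P)" and E: "?E \<subseteq> idx (Pdag P)"
    using in_node_subset_idx[of "Pdag P" "OldN u"] tau_inputs_subset_idx[OF s] by blast+
  have "determined_by g ?U (links_of La \<union> ?E)"
    by (rule determined_by_mono[OF in_node_OldN_determined_by_La]) (use U E in auto)
  then have "g (links_of La \<union> ?U \<union> ?E) = g (links_of La \<union> ?U) + g ?E"
    using rank_La_tau_inputs[OF s] in_node_OldN_determined_by_La[of u]
    by (simp add: determined_by_def Un_ac)
  then have "g ({Inr (La s)} \<union> ?U \<union> ?E) = g ({Inr (La s)} \<union> ?U) + g ?E"
    by (rule additive_subset) (use s U E in auto)
  moreover have "g ({Inr (La s)} \<union> ?U \<union> ?E) = g (?E \<union> ?U)"
    using La_determined_by_tau_inputs_and_OldN[OF s u] by (simp add: determined_by_def Un_ac)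
  moreover have "g (?E \<union> ?U) \<le> g ?U + g ?E"
    using subadditive[OF E U] by simp
  ultimately show ?thesis using U s by (simp add: determined_by_iff)
qed

lemma embed_idx_constraints: "(\<lambda>A. g (embed_idx ` A)) \<in> C_I P \<inter> C_T P \<inter> C_D P"
  using tight_La_Lc(1,3) constraints La_determined_by_OldN
  by (simp add: C_I_def C_T_def C_D_def image_image embed_idx_in_link embed_idx_in_node
      determined_by_def)
end

lemma outer_bound_of_outer_bound_Pdag:
  assumes valid: "valid_problem P" and ob: "Tdag P (l, w) \<in> outer_bound (Pdag P)"
  shows "(l, w) \<in> outer_bound P"
proof -
  obtain g where g: "almost_entropic_on (idx (Pdag P)) g"
    "g \<in> C_I (Pdag P) \<inter> C_T (Pdag P) \<inter> C_D (Pdag P)"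
    "\<And>lk. lk \<in> links (Pdag P) \<Longrightarrow> g {Inr lk} \<le> snd (Tdag P (l, w)) lk"
    "\<And>x. x \<in> srcs (Pdag P) \<Longrightarrow> fst (Tdag P (l, w)) x \<le> g {Inl x}"
    using outer_bound_attained[OF finite_idx_Pdag[OF valid] ob] by blast
  have rate: "(\<Sum>s\<in>srcs P. l s) \<le> g {Inl x}" for x
    using g(4)[of x] by (cases x) (auto simp: Tdag_def)
  have cap: "g {Inr (La s)} \<le> l s \<and> g {Inr (Lb s)} \<le> l s \<and> g {Inr (Lc s)} \<le> l s"
    if "s \<in> srcs P" for s
    using g(3)[of "La s"] g(3)[of "Lb s"] g(3)[of "Lc s"] that by (simp add: Tdag_def)
  have dag: "dagger_polymatroid P g l"
    using polymatroid_if_almost_entropic_on[OF finite_idx_Pdag[OF valid] g(1)] g(2) rate cap valid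
    by unfold_locales (auto simp: polymatroid_def)
  define h where "h A = g (embed_idx ` A)" for A
  have "h \<in> Gamma_bar P"
    unfolding Gamma_bar_def h_def
    by (intro CollectI almost_entropic_on_relabel[OF inj_embed_idx g(1)]) (auto simp: idx_def)
  moreover have "h \<in> C_I P \<inter> C_T P \<inter> C_D P"
    unfolding h_def by (rule dagger_polymatroid.embed_idx_constraints[OF dag])
  moreover have "h {Inr e} \<le> w e" if "e \<in> links P" for e
    using g(3)[of "OldL e"] that by (simp add: h_def Tdag_def)
  moreover have "h {Inl s} = l s" if "s \<in> srcs P" for s
    using dagger_polymatroid.rank_singletons[OF dag that] by (simp add: h_def)
  ultimately show ?thesis unfolding outer_bound_def CL_def
    by (intro CollectI exI[of _ "\<lambda>n. proj P h"] exI[of _ "\<lambda>n. 1"] conjI allI ballI)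
      (auto simp: proj_def)
qed

section \<open>Deterministic zero-error codes\<close>

definition decodes :: "('v, 'e, 's) problem \<Rightarrow> ('s + 'e \<Rightarrow> nat) pmf \<Rightarrow> bool" where
  "decodes P Q \<longleftrightarrow>
     (\<forall>s\<in>srcs P. \<forall>u\<in>dest P s. jent Q ({Inl s} \<union> in_node P u) - jent Q (in_node P u) = 0)"

lemma one_le_card_SP: "finite (SP Q i) \<Longrightarrow> 1 \<le> card (SP Q i)"
  by (simp add: Suc_le_eq card_gt_0_iff SP_def set_pmf_not_empty)

text \<open>Message tuples \<open>x\<close> are total functions, fixed to \<open>0\<close> off the sources; a deterministic code
  \<open>F\<close> assigns to them the link values \<open>F x e\<close>.\<close>

definition msgs :: "('v, 'e, 's) problem \<Rightarrow> ('s \<Rightarrow> nat set) \<Rightarrow> ('s \<Rightarrow> nat) set" where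
  "msgs P A = PiE_dflt (srcs P) 0 A"

definition code_vals :: "(('s \<Rightarrow> nat) \<Rightarrow> 'e \<Rightarrow> nat) \<Rightarrow> ('s \<Rightarrow> nat) \<Rightarrow> 's + 'e \<Rightarrow> nat" where
  "code_vals F x = case_sum x (F x)"

definition zero_error_code ::
    "('v, 'e, 's) problem \<Rightarrow> ('s \<Rightarrow> nat set) \<Rightarrow> (('s \<Rightarrow> nat) \<Rightarrow> 'e \<Rightarrow> nat) \<Rightarrow> bool" where
  "zero_error_code P A F \<longleftrightarrow> (\<forall>s\<in>srcs P. finite (A s) \<and> A s \<noteq> {}) \<and>
     (\<forall>e\<in>links P. \<forall>x\<in>msgs P A. \<forall>x'\<in>msgs P A.
        (\<forall>i\<in>in_link P e. code_vals F x i = code_vals F x' i) \<longrightarrow> F x e = F x' e) \<and>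
     (\<forall>s\<in>srcs P. \<forall>u\<in>dest P s. \<forall>x\<in>msgs P A. \<forall>x'\<in>msgs P A.
        (\<forall>i\<in>in_node P u. code_vals F x i = code_vals F x' i) \<longrightarrow> x s = x' s)"

definition link_alphabet ::
    "('v, 'e, 's) problem \<Rightarrow> ('s \<Rightarrow> nat set) \<Rightarrow> (('s \<Rightarrow> nat) \<Rightarrow> 'e \<Rightarrow> nat) \<Rightarrow> 'e \<Rightarrow> nat set" where
  "link_alphabet P A F e = (\<lambda>x. F x e) ` msgs P A"

definition code_pmf ::
    "('v, 'e, 's) problem \<Rightarrow> ('s \<Rightarrow> nat set) \<Rightarrow> (('s \<Rightarrow> nat) \<Rightarrow> 'e \<Rightarrow> nat) \<Rightarrow> ('s + 'e \<Rightarrow> nat) pmf" where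
  "code_pmf P A F = map_pmf (code_vals F) (Pi_pmf (srcs P) 0 (\<lambda>s. pmf_of_set (A s)))"

lemma pmf_map_pmf_inj_on_superset:
  assumes "inj_on f T" "set_pmf M \<subseteq> T" "x \<in> T"
  shows "pmf (map_pmf f M) (f x) = pmf M x"
proof (cases "x \<in> set_pmf M")
  case True
  then show ?thesis using assms by (intro pmf_map_inj) (auto intro: inj_on_subset)
next
  case False
  then have "f x \<notin> set_pmf (map_pmf f M)" using assms by (auto dest: inj_onD)
  then show ?thesis using False by (simp add: set_pmf_eq)
qed

context
  fixes P :: "('v, 'e, 's) problem" and A F
  assumes finite_srcs: "finite (srcs P)" and code: "zero_error_code P A F"
begin

lemma zero_error_code_alphabet: "s \<in> srcs P \<Longrightarrow> finite (A s)" "s \<in> srcs P \<Longrightarrow> A s \<noteq> {}"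
  using code by (auto simp: zero_error_code_def)

lemma zero_error_code_link:
  "e \<in> links P \<Longrightarrow> x \<in> msgs P A \<Longrightarrow> x' \<in> msgs P A \<Longrightarrow>
    (\<forall>i\<in>in_link P e. code_vals F x i = code_vals F x' i) \<Longrightarrow> F x e = F x' e"
  using code unfolding zero_error_code_def by blast

lemma zero_error_code_decode:
  "s \<in> srcs P \<Longrightarrow> u \<in> dest P s \<Longrightarrow> x \<in> msgs P A \<Longrightarrow> x' \<in> msgs P A \<Longrightarrow>
    (\<forall>i\<in>in_node P u. code_vals F x i = code_vals F x' i) \<Longrightarrow> x s = x' s"
  using code unfolding zero_error_code_def by blast

lemma set_pmf_msgs: "set_pmf (Pi_pmf (srcs P) 0 (\<lambda>s. pmf_of_set (A s))) = msgs P A"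
  using finite_srcs zero_error_code_alphabet by (auto simp: set_Pi_pmf msgs_def o_def PiE_dflt_def)

lemma finite_msgs: "finite (msgs P A)"
  unfolding msgs_def using finite_srcs zero_error_code_alphabet by (intro finite_PiE_dflt) auto

lemma finite_link_alphabet: "finite (link_alphabet P A F e)"
  using finite_msgs by (simp add: link_alphabet_def)

lemma set_code_pmf: "set_pmf (code_pmf P A F) = code_vals F ` msgs P A"
  by (simp add: code_pmf_def set_pmf_msgs)

lemma marg_code_pmf: "s \<in> srcs P \<Longrightarrow> marg (code_pmf P A F) (Inl s) = pmf_of_set (A s)"
  by (simp add: marg_def code_pmf_def pmf.map_comp o_def code_vals_def Pi_pmf_component[OF finite_srcs])

lemma SP_code_pmf_Inl: "s \<in> srcs P \<Longrightarrow> SP (code_pmf P A F) (Inl s) = A s"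
  using zero_error_code_alphabet by (simp add: SP_def marg_code_pmf)

lemma SP_code_pmf_Inr: "SP (code_pmf P A F) (Inr e) = link_alphabet P A F e"
  by (simp add: SP_def marg_def code_pmf_def pmf.map_comp o_def code_vals_def set_pmf_msgs
      link_alphabet_def)

lemma jent_code_pmf_determined:
  assumes "\<And>x x'. x \<in> msgs P A \<Longrightarrow> x' \<in> msgs P A \<Longrightarrow>
      (\<forall>i\<in>I. code_vals F x i = code_vals F x' i) \<Longrightarrow> code_vals F x j = code_vals F x' j"
  shows "jent (code_pmf P A F) (I \<union> {j}) - jent (code_pmf P A F) I = 0"
proof -
  have "jent (code_pmf P A F) (I \<union> {j}) = jent (code_pmf P A F) I"
  proof (rule jent_Un_eq_if_rst_eq)
    fix y y' assume y: "y \<in> set_pmf (code_pmf P A F)" and y': "y' \<in> set_pmf (code_pmf P A F)"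
      and agree: "rst I y = rst I y'"
    obtain x where x: "x \<in> msgs P A" "y = code_vals F x" using y by (auto simp: set_code_pmf)
    obtain x' where x': "x' \<in> msgs P A" "y' = code_vals F x'" using y' by (auto simp: set_code_pmf)
    have "\<forall>i\<in>I. code_vals F x i = code_vals F x' i"
    proof
      fix i assume "i \<in> I"
      then show "code_vals F x i = code_vals F x' i"
        using fun_cong[OF agree, of i] x x' by (simp add: rst_def)
    qed
    then have "code_vals F x j = code_vals F x' j" using assms x x' by blast
    then show "rst {j} y = rst {j} y'" using x x' by (simp add: rst_def fun_eq_iff)
  qed
  then show ?thesis by simp
qed

lemma code_pmf_sources_independent:
  "pmf (map_pmf (rst (Inl ` srcs P)) (code_pmf P A F)) (rst (Inl ` srcs P) x) =
      (\<Prod>s\<in>srcs P. pmf (marg (code_pmf P A F) (Inl s)) (x (Inl s)))"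
proof -
  define W where "W y = rst (Inl ` srcs P) (code_vals F y)" for y :: "'s \<Rightarrow> nat"
  define T where "T = {y :: 's \<Rightarrow> nat. \<forall>s. s \<notin> srcs P \<longrightarrow> y s = 0}"
  define x0 where "x0 s = (if s \<in> srcs P then x (Inl s) else 0)" for s
  have injW: "inj_on W T"
  proof (rule inj_onI, rule ext)
    fix y y' s assume "y \<in> T" "y' \<in> T" "W y = W y'"
    show "y s = y' s"
    proof (cases "s \<in> srcs P")
      case True
      have "W y (Inl s) = W y' (Inl s)" using \<open>W y = W y'\<close> by simp
      then show ?thesis using True by (simp add: W_def rst_def code_vals_def)
    qed (use \<open>y \<in> T\<close> \<open>y' \<in> T\<close> in \<open>simp add: T_def\<close>)
  qed
  have W0: "W x0 = rst (Inl ` srcs P) x"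
    by (rule ext) (auto simp: W_def x0_def rst_def code_vals_def split: sum.split)
  have "map_pmf (rst (Inl ` srcs P)) (code_pmf P A F) = map_pmf W (Pi_pmf (srcs P) 0 (\<lambda>s. pmf_of_set (A s)))"
    unfolding W_def[abs_def] by (simp add: code_pmf_def pmf.map_comp o_def)
  then have "pmf (map_pmf (rst (Inl ` srcs P)) (code_pmf P A F)) (rst (Inl ` srcs P) x)
      = pmf (Pi_pmf (srcs P) 0 (\<lambda>s. pmf_of_set (A s))) x0"
  proof -
    have "set_pmf (Pi_pmf (srcs P) 0 (\<lambda>s. pmf_of_set (A s))) \<subseteq> T"
      unfolding set_pmf_msgs msgs_def PiE_dflt_def T_def by blast
    moreover have "x0 \<in> T" by (simp add: T_def x0_def)
    ultimately show ?thesis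
      using pmf_map_pmf_inj_on_superset[OF injW, of _ x0] W0 \<open>map_pmf _ _ = _\<close> by simp
  qed
  also have "\<dots> = (\<Prod>s\<in>srcs P. pmf (pmf_of_set (A s)) (x0 s))"
    by (rule pmf_Pi'[OF finite_srcs]) (simp add: x0_def)
  also have "\<dots> = (\<Prod>s\<in>srcs P. pmf (marg (code_pmf P A F) (Inl s)) (x (Inl s)))"
    by (intro prod.cong refl) (simp add: marg_code_pmf x0_def)
  finally show ?thesis .
qed

lemma network_code_code_pmf:
  assumes "finite (links P)" shows "network_code P (code_pmf P A F)"
  unfolding network_code_def
proof (intro conjI ballI allI)
  fix f assume f: "f \<in> idx P"
  show "finite (SP (code_pmf P A F) f)"
  proof (cases f)
    case (Inl s)
    then show ?thesis using f zero_error_code_alphabet(1)[of s] by (auto simp: idx_def SP_code_pmf_Inl)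
  qed (simp add: SP_code_pmf_Inr finite_link_alphabet)
next
  fix s x assume s: "s \<in> srcs P" and "x \<in> SP (code_pmf P A F) (Inl s)"
  then show "pmf (marg (code_pmf P A F) (Inl s)) x = 1 / real (card (SP (code_pmf P A F) (Inl s)))"
    using zero_error_code_alphabet[OF s] by (simp add: marg_code_pmf SP_code_pmf_Inl[OF s])
next
  fix e assume e: "e \<in> links P"
  show "jent (code_pmf P A F) (in_link P e \<union> {Inr e}) - jent (code_pmf P A F) (in_link P e) = 0"
  proof (rule jent_code_pmf_determined)
    fix x x' assume "x \<in> msgs P A" "x' \<in> msgs P A"
      "\<forall>i\<in>in_link P e. code_vals F x i = code_vals F x' i"
    then have "F x e = F x' e" by (rule zero_error_code_link[OF e])
    then show "code_vals F x (Inr e) = code_vals F x' (Inr e)" by (simp add: code_vals_def)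
  qed
qed (rule code_pmf_sources_independent)

lemma decodes_code_pmf: "decodes P (code_pmf P A F)"
  unfolding decodes_def
proof (intro ballI)
  fix s u assume su: "s \<in> srcs P" "u \<in> dest P s"
  have "jent (code_pmf P A F) (in_node P u \<union> {Inl s}) - jent (code_pmf P A F) (in_node P u) = 0"
  proof (rule jent_code_pmf_determined)
    fix x x' assume "x \<in> msgs P A" "x' \<in> msgs P A"
      "\<forall>i\<in>in_node P u. code_vals F x i = code_vals F x' i"
    then have "x s = x' s" by (rule zero_error_code_decode[OF su])
    then show "code_vals F x (Inl s) = code_vals F x' (Inl s)" by (simp add: code_vals_def)
  qed
  then show "jent (code_pmf P A F) ({Inl s} \<union> in_node P u) - jent (code_pmf P A F) (in_node P u) = 0"
    by (simp add: Un_commute)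
qed

end

text \<open>By independence of the sources every message tuple occurs in the support of a
  network code.\<close>

lemma network_code_support_covers_msgs:
  fixes Q :: "('s + 'e \<Rightarrow> nat) pmf"
  assumes "network_code P Q" "x \<in> msgs P (\<lambda>s. SP Q (Inl s))"
  shows "\<exists>y. y \<in> set_pmf Q \<and> (\<forall>s\<in>srcs P. y (Inl s) = x s)"
proof -
  define x' :: "'s + 'e \<Rightarrow> nat" where "x' = case_sum x (\<lambda>_. 0)"
  have "0 < (\<Prod>s\<in>srcs P. pmf (marg Q (Inl s)) (x' (Inl s)))"
    using assms(2) by (intro prod_pos) (auto simp: x'_def msgs_def PiE_dflt_def SP_def pmf_positive)
  then have "0 < pmf (map_pmf (rst (Inl ` srcs P)) Q) (rst (Inl ` srcs P) x')"
    using assms(1) by (simp add: network_code_def)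
  then have "rst (Inl ` srcs P) x' \<in> set_pmf (map_pmf (rst (Inl ` srcs P)) Q)"
    unfolding set_pmf_iff by linarith
  then obtain y where y: "y \<in> set_pmf Q" "rst (Inl ` srcs P) y = rst (Inl ` srcs P) x'" by auto
  have "y (Inl s) = x s" if "s \<in> srcs P" for s
    using fun_cong[OF y(2), of "Inl s"] that by (simp add: rst_def x'_def)
  then show ?thesis using y(1) by blast
qed

text \<open>A zero-error code is read off the support of a decoding network code: the link
  values are those of a support point with the given source messages.\<close>

lemma zero_error_code_of_network_code:
  fixes P :: "('v, 'e, 's) problem"
  assumes valid: "valid_problem P" and nc: "network_code P Q"
    and dec: "decodes P Q"
  obtains F where "zero_error_code P (\<lambda>s. SP Q (Inl s)) F"
    "\<And>e. link_alphabet P (\<lambda>s. SP Q (Inl s)) F e \<subseteq> SP Q (Inr e)"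
proof -
  define A where "A s = SP Q (Inl s)" for s
  have finite_idx: "finite (idx P)" using valid by (simp add: valid_problem_def idx_def)
  have finite_SP: "\<And>i. i \<in> idx P \<Longrightarrow> finite (SP Q i)" using nc by (simp add: network_code_def)
  define Y where "Y x = (SOME y. y \<in> set_pmf Q \<and> (\<forall>s\<in>srcs P. y (Inl s) = x s))" for x
  have Y: "Y x \<in> set_pmf Q" "\<And>s. s \<in> srcs P \<Longrightarrow> Y x (Inl s) = x s" if "x \<in> msgs P A" for x
    using someI_ex[OF network_code_support_covers_msgs[OF nc that[unfolded A_def]]]
    by (auto simp: Y_def)
  define F where "F x e = Y x (Inr e)" for x e
  have code_vals_Y: "code_vals F x i = Y x i" if "x \<in> msgs P A" "i \<in> idx P" for x i
    using that Y by (cases i) (auto simp: code_vals_def F_def idx_def)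
  have determined: "Y x j = Y x' j"
    if "x \<in> msgs P A" "x' \<in> msgs P A" "I \<subseteq> idx P" "j \<in> idx P"
      "jent Q (I \<union> {j}) = jent Q I" "\<forall>i\<in>I. code_vals F x i = code_vals F x' i" for x x' I j
  proof (rule eq_on_support_if_jent_Un_eq[where I = I])
    show "finite (I \<union> {j})" using that finite_subset[OF _ finite_idx] by auto
    show "\<And>i. i \<in> I \<union> {j} \<Longrightarrow> finite (SP Q i)" using that finite_SP by auto
    show "\<forall>i\<in>I. Y x i = Y x' i" using that code_vals_Y by (metis subsetD)
  qed (use that Y(1) in auto)
  have "zero_error_code P A F"
    unfolding zero_error_code_def
  proof (intro conjI ballI impI)
    show "finite (A s)" "A s \<noteq> {}" if "s \<in> srcs P" for s
      using that finite_SP by (auto simp: A_def idx_def SP_def set_pmf_not_empty)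
    show "F x e = F x' e"
      if "e \<in> links P" "x \<in> msgs P A" "x' \<in> msgs P A" "\<forall>i\<in>in_link P e. code_vals F x i = code_vals F x' i"
      for e x x'
    proof -
      have "jent Q (in_link P e \<union> {Inr e}) = jent Q (in_link P e)"
        using nc that(1) by (simp add: network_code_def)
      then show ?thesis unfolding F_def
        using that in_link_subset_idx[of P e] by (intro determined[where I = "in_link P e"]) (auto simp: idx_def)
    qed
    show "x s = x' s"
      if "s \<in> srcs P" "u \<in> dest P s" "x \<in> msgs P A" "x' \<in> msgs P A"
        "\<forall>i\<in>in_node P u. code_vals F x i = code_vals F x' i" for s u x x'
    proof -
      have "jent Q (in_node P u \<union> {Inl s}) = jent Q (in_node P u)"
        using dec that(1,2) by (simp add: decodes_def Un_commute)
      then have "Y x (Inl s) = Y x' (Inl s)"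
        using that in_node_subset_idx[of P u] by (intro determined[where I = "in_node P u"]) (auto simp: idx_def)
      then show ?thesis using Y(2) that by metis
    qed
  qed
  moreover have "link_alphabet P A F e \<subseteq> SP Q (Inr e)" for e
    using Y(1) by (auto simp: link_alphabet_def F_def SP_def marg_def)
  ultimately show ?thesis using that unfolding A_def by blast
qed

text \<open>The \<open>k\<close>-fold use of a code: messages and link values are length-\<open>k\<close> lists,
  encoded as natural numbers.\<close>

definition prod_alphabet :: "nat \<Rightarrow> ('s \<Rightarrow> nat set) \<Rightarrow> 's \<Rightarrow> nat set" where
  "prod_alphabet k A s = list_encode ` {xs. set xs \<subseteq> A s \<and> length xs = k}"

definition component :: "('v, 'e, 's) problem \<Rightarrow> nat \<Rightarrow> ('s \<Rightarrow> nat) \<Rightarrow> 's \<Rightarrow> nat" where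
  "component P j x = (\<lambda>s. if s \<in> srcs P then list_decode (x s) ! j else 0)"

definition prod_code ::
    "('v, 'e, 's) problem \<Rightarrow> nat \<Rightarrow> (('s \<Rightarrow> nat) \<Rightarrow> 'e \<Rightarrow> nat) \<Rightarrow> ('s \<Rightarrow> nat) \<Rightarrow> 'e \<Rightarrow> nat" where
  "prod_code P k F x e = list_encode (map (\<lambda>j. F (component P j x) e) [0..<k])"

lemma prod_alphabet_iff:
  "v \<in> prod_alphabet k A s \<longleftrightarrow> set (list_decode v) \<subseteq> A s \<and> length (list_decode v) = k"
proof
  assume "set (list_decode v) \<subseteq> A s \<and> length (list_decode v) = k"
  moreover have "v = list_encode (list_decode v)" by simp
  ultimately show "v \<in> prod_alphabet k A s" unfolding prod_alphabet_def by blast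
qed (auto simp: prod_alphabet_def)

lemma component_in_msgs:
  assumes "x \<in> msgs P (prod_alphabet k A)" "j < k" shows "component P j x \<in> msgs P A"
proof -
  have "set (list_decode (x s)) \<subseteq> A s" "length (list_decode (x s)) = k" if "s \<in> srcs P" for s
    using assms(1) that unfolding msgs_def PiE_dflt_def prod_alphabet_iff by auto
  then have "list_decode (x s) ! j \<in> A s" if "s \<in> srcs P" for s
    using assms(2) that by (metis nth_mem subsetD)
  then show ?thesis unfolding msgs_def PiE_dflt_def component_def by simp
qed

lemma code_vals_component_agree:
  assumes "\<forall>i\<in>I. code_vals (prod_code P k F) x i = code_vals (prod_code P k F) x' i" "j < k"
  shows "\<forall>i\<in>I. code_vals F (component P j x) i = code_vals F (component P j x') i"
proof
  fix i assume i: "i \<in> I"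
  show "code_vals F (component P j x) i = code_vals F (component P j x') i"
  proof (cases i)
    case (Inl s)
    then show ?thesis using assms i by (auto simp: code_vals_def component_def)
  next
    case (Inr f)
    then have "list_encode (map (\<lambda>j. F (component P j x) f) [0..<k])
        = list_encode (map (\<lambda>j. F (component P j x') f) [0..<k])"
      using assms i by (auto simp: code_vals_def prod_code_def)
    then have "map (\<lambda>j. F (component P j x) f) [0..<k] = map (\<lambda>j. F (component P j x') f) [0..<k]"
      by (metis list_encode_inverse)
    then show ?thesis using Inr assms(2) by (simp add: code_vals_def map_eq_conv)
  qed
qed

context
  fixes P :: "('v, 'e, 's) problem" and A F
  assumes finite_srcs: "finite (srcs P)" and code: "zero_error_code P A F"
begin

lemma zero_error_code_prod: "zero_error_code P (prod_alphabet k A) (prod_code P k F)"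
  unfolding zero_error_code_def
proof (intro conjI ballI impI)
  fix s assume s: "s \<in> srcs P"
  obtain a where "a \<in> A s" using zero_error_code_alphabet[OF finite_srcs code s] by auto
  then have "list_encode (replicate k a) \<in> prod_alphabet k A s" unfolding prod_alphabet_def by auto
  then show "prod_alphabet k A s \<noteq> {}" by auto
  show "finite (prod_alphabet k A s)"
    unfolding prod_alphabet_def using zero_error_code_alphabet[OF finite_srcs code s]
    by (simp add: finite_lists_length_eq)
next
  fix e x x' assume e: "e \<in> links P" and x: "x \<in> msgs P (prod_alphabet k A)"
    and x': "x' \<in> msgs P (prod_alphabet k A)"
    and agree: "\<forall>i\<in>in_link P e. code_vals (prod_code P k F) x i = code_vals (prod_code P k F) x' i"
  have "F (component P j x) e = F (component P j x') e" if "j < k" for j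
    using zero_error_code_link[OF finite_srcs code e component_in_msgs[OF x that]
        component_in_msgs[OF x' that] code_vals_component_agree[OF agree that]] .
  then show "prod_code P k F x e = prod_code P k F x' e"
    unfolding prod_code_def by (intro arg_cong[where f = list_encode] map_cong) auto
next
  fix s u x x' assume s: "s \<in> srcs P" and u: "u \<in> dest P s" and x: "x \<in> msgs P (prod_alphabet k A)"
    and x': "x' \<in> msgs P (prod_alphabet k A)"
    and agree: "\<forall>i\<in>in_node P u. code_vals (prod_code P k F) x i = code_vals (prod_code P k F) x' i"
  have "list_decode (x s) ! j = list_decode (x' s) ! j" if "j < k" for j
    using zero_error_code_decode[OF finite_srcs code s u component_in_msgs[OF x that]
        component_in_msgs[OF x' that] code_vals_component_agree[OF agree that]] s
    by (simp add: component_def)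
  moreover have "length (list_decode (x s)) = k" "length (list_decode (x' s)) = k"
    using x x' s by (auto simp: msgs_def PiE_dflt_def prod_alphabet_iff)
  ultimately have "list_decode (x s) = list_decode (x' s)" by (simp add: nth_equalityI)
  then show "x s = x' s" by (metis list_decode_inverse)
qed

lemma card_prod_alphabet: "s \<in> srcs P \<Longrightarrow> card (prod_alphabet k A s) = card (A s) ^ k"
  unfolding prod_alphabet_def using zero_error_code_alphabet[OF finite_srcs code]
  by (subst card_image) (auto intro: inj_on_subset[OF inj_list_encode] simp: card_lists_length_eq)

lemma card_link_alphabet_prod:
  "card (link_alphabet P (prod_alphabet k A) (prod_code P k F) e) \<le> card (link_alphabet P A F e) ^ k"
proof -
  let ?L = "link_alphabet P A F e"
  have fin: "finite ?L" by (rule finite_link_alphabet[OF finite_srcs code])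
  have "link_alphabet P (prod_alphabet k A) (prod_code P k F) e
      \<subseteq> list_encode ` {xs. set xs \<subseteq> ?L \<and> length xs = k}"
  proof
    fix v assume "v \<in> link_alphabet P (prod_alphabet k A) (prod_code P k F) e"
    then obtain x where x: "x \<in> msgs P (prod_alphabet k A)" "v = prod_code P k F x e"
      by (auto simp: link_alphabet_def)
    have "set (map (\<lambda>j. F (component P j x) e) [0..<k]) \<subseteq> ?L"
      using component_in_msgs[OF x(1)] by (auto simp: link_alphabet_def)
    then show "v \<in> list_encode ` {xs. set xs \<subseteq> ?L \<and> length xs = k}"
      using x(2) unfolding prod_code_def by auto
  qed
  then have "card (link_alphabet P (prod_alphabet k A) (prod_code P k F) e)
      \<le> card (list_encode ` {xs. set xs \<subseteq> ?L \<and> length xs = k})"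
    using fin by (intro card_mono) (auto simp: finite_lists_length_eq)
  also have "\<dots> \<le> card {xs. set xs \<subseteq> ?L \<and> length xs = k}"
    by (rule card_image_le) (simp add: finite_lists_length_eq fin)
  also have "\<dots> = card ?L ^ k" using fin by (simp add: card_lists_length_eq)
  finally show ?thesis .
qed

end

section \<open>Codes for the two-layer problem\<close>

lemma mod_add_left_cancel_less:
  fixes a b b' M :: nat
  assumes "(a + b) mod M = (a + b') mod M" "b < M" "b' < M"
  shows "b = b'"
proof -
  have "(int a + int b) mod int M = (int a + int b') mod int M"
    using assms(1) by (metis of_nat_add zmod_int)
  then have "(int a + int b - int a) mod int M = (int a + int b' - int a) mod int M"
    by (rule mod_diff_cong) simp
  then show ?thesis using assms(2,3) by simp
qed

text \<open>The zero-error code for \<open>P\<^sup>\<dagger>\<close> built from one for \<open>P\<close>: sources \<open>1'\<close> and \<open>2'\<close>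
  carry tuples \<open>X, Y\<close> with \<open>X\<^sub>s, Y\<^sub>s < M\<^sub>s\<close> (encoded as numbers by \<open>D\<close>); the links \<open>b\<^sub>s\<close>
  and \<open>c\<^sub>s\<close> carry \<open>X\<^sub>s\<close> and \<open>Y\<^sub>s\<close>, while \<open>a\<^sub>s\<close> and \<open>d\<^sub>s\<^sub>,\<^sub>u\<close> carry \<open>X\<^sub>s + Y\<^sub>s mod M\<^sub>s\<close>, which
  (relabelled into \<open>A\<^sub>s\<close> by \<open>\<sigma>\<^sub>s\<close>) is the message of source \<open>s\<close> for the old network.\<close>

locale dagger_code =
  fixes P :: "('v, 'e, 's) problem" and A F and M :: "'s \<Rightarrow> nat" and \<sigma> :: "'s \<Rightarrow> nat \<Rightarrow> nat"
    and D :: "nat \<Rightarrow> 's \<Rightarrow> nat"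
  assumes valid: "valid_problem P" and code: "zero_error_code P A F"
    and M_pos: "\<And>s. s \<in> srcs P \<Longrightarrow> 0 < M s"
    and \<sigma>: "\<And>s. s \<in> srcs P \<Longrightarrow> inj_on (\<sigma> s) {..<M s} \<and> \<sigma> s ` {..<M s} \<subseteq> A s"
    and D: "bij_betw D {..<prod M (srcs P)} (PiE_dflt (srcs P) 0 (\<lambda>s. {..<M s}))"
begin

definition first_msg :: "(dsrc \<Rightarrow> nat) \<Rightarrow> 's \<Rightarrow> nat" where
  "first_msg xx = D (xx Src1)"

definition second_msg :: "(dsrc \<Rightarrow> nat) \<Rightarrow> 's \<Rightarrow> nat" where
  "second_msg xx = D (xx Src2)"

definition mixed_msg :: "(dsrc \<Rightarrow> nat) \<Rightarrow> 's \<Rightarrow> nat" where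
  "mixed_msg xx s = (first_msg xx s + second_msg xx s) mod M s"

definition inner_msg :: "(dsrc \<Rightarrow> nat) \<Rightarrow> 's \<Rightarrow> nat" where
  "inner_msg xx = (\<lambda>s. if s \<in> srcs P then \<sigma> s (mixed_msg xx s) else 0)"

definition link_code :: "(dsrc \<Rightarrow> nat) \<Rightarrow> ('v, 's, 'e) dlink \<Rightarrow> nat" where
  "link_code xx lk = (case lk of
      OldL e \<Rightarrow> F (inner_msg xx) e
    | La s \<Rightarrow> mixed_msg xx s
    | Lb s \<Rightarrow> first_msg xx s
    | Lc s \<Rightarrow> second_msg xx s
    | Ld s u \<Rightarrow> mixed_msg xx s)"

abbreviation dagger_alphabet :: "dsrc \<Rightarrow> nat set" where
  "dagger_alphabet \<equiv> \<lambda>_. {..<prod M (srcs P)}"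

lemma finite_srcs: "finite (srcs P)"
  using valid by (simp add: valid_problem_def)

lemma msgs_dagger_iff:
  "xx \<in> msgs (Pdag P) dagger_alphabet \<longleftrightarrow> xx Src1 < prod M (srcs P) \<and> xx Src2 < prod M (srcs P)"
  by (auto simp: msgs_def PiE_dflt_def) (metis dsrc.exhaust)

lemma D_less:
  assumes "x < prod M (srcs P)" "s \<in> srcs P" shows "D x s < M s"
  using bij_betwE[OF D] assms by (auto simp: PiE_dflt_def)

lemma D_eq_if_eq_on_srcs:
  assumes "x < prod M (srcs P)" "y < prod M (srcs P)" "\<forall>s\<in>srcs P. D x s = D y s"
  shows "x = y"
proof -
  have "D x = D y"
    using bij_betwE[OF D] assms by (fastforce simp: PiE_dflt_def)
  then show ?thesis using bij_betw_imp_inj_on[OF D] assms by (auto dest: inj_onD)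
qed

lemma mixed_msg_less: "s \<in> srcs P \<Longrightarrow> mixed_msg xx s < M s"
  by (simp add: mixed_msg_def M_pos)

lemma inner_msg_in_msgs: "inner_msg xx \<in> msgs P A"
  using \<sigma> mixed_msg_less by (fastforce simp: inner_msg_def msgs_def PiE_dflt_def)

lemma first_msg_eq_if_mixed_eq:
  assumes "xx \<in> msgs (Pdag P) dagger_alphabet" "xx' \<in> msgs (Pdag P) dagger_alphabet" "s \<in> srcs P"
    "mixed_msg xx s = mixed_msg xx' s" "second_msg xx s = second_msg xx' s"
  shows "first_msg xx s = first_msg xx' s"
proof (rule mod_add_left_cancel_less)
  show "(second_msg xx s + first_msg xx s) mod M s = (second_msg xx s + first_msg xx' s) mod M s"
    using assms(4,5) by (simp add: mixed_msg_def add.commute)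
qed (use assms D_less in \<open>auto simp: msgs_dagger_iff first_msg_def\<close>)

lemma second_msg_eq_if_mixed_eq:
  assumes "xx \<in> msgs (Pdag P) dagger_alphabet" "xx' \<in> msgs (Pdag P) dagger_alphabet" "s \<in> srcs P"
    "mixed_msg xx s = mixed_msg xx' s" "first_msg xx s = first_msg xx' s"
  shows "second_msg xx s = second_msg xx' s"
proof (rule mod_add_left_cancel_less)
  show "(first_msg xx s + second_msg xx s) mod M s = (first_msg xx s + second_msg xx' s) mod M s"
    using assms(4,5) by (simp add: mixed_msg_def)
qed (use assms D_less in \<open>auto simp: msgs_dagger_iff second_msg_def\<close>)

lemma code_vals_inner_msg_agree:
  assumes "\<forall>i\<in>embed_idx ` I. code_vals link_code xx i = code_vals link_code xx' i"
  shows "\<forall>i\<in>I. code_vals F (inner_msg xx) i = code_vals F (inner_msg xx') i"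
proof
  fix i assume "i \<in> I"
  then have "code_vals link_code xx (embed_idx i) = code_vals link_code xx' (embed_idx i)"
    using assms by blast
  then show "code_vals F (inner_msg xx) i = code_vals F (inner_msg xx') i"
    by (cases i) (simp_all add: code_vals_def link_code_def inner_msg_def)
qed

end

context dagger_code
begin

lemma link_code_determined:
  assumes lk: "lk \<in> links (Pdag P)"
    and xx: "xx \<in> msgs (Pdag P) dagger_alphabet" and xx': "xx' \<in> msgs (Pdag P) dagger_alphabet"
    and agree: "\<forall>i\<in>in_link (Pdag P) lk. code_vals link_code xx i = code_vals link_code xx' i"
  shows "link_code xx lk = link_code xx' lk"
proof (cases lk)
  case (OldL e)
  then have "\<forall>i\<in>in_link P e. code_vals F (inner_msg xx) i = code_vals F (inner_msg xx') i"
    using agree by (intro code_vals_inner_msg_agree) (simp add: embed_idx_in_link)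
  then show ?thesis
    using zero_error_code_link[OF finite_srcs code _ inner_msg_in_msgs inner_msg_in_msgs] OldL lk
    by (simp add: link_code_def)
next
  case (Lc s)
  then have "s \<in> srcs P" using lk by simp
  moreover have "mixed_msg xx s = mixed_msg xx' s" "first_msg xx s = first_msg xx' s"
    using agree Lc \<open>s \<in> srcs P\<close> by (auto simp: in_link_Pdag code_vals_def link_code_def)
  ultimately show ?thesis using second_msg_eq_if_mixed_eq[OF xx xx'] Lc by (simp add: link_code_def)
next
  case (Ld s u)
  then have s: "s \<in> srcs P" and u: "u \<in> dest P s" using lk by auto
  have "\<forall>i\<in>in_node P u. code_vals F (inner_msg xx) i = code_vals F (inner_msg xx') i"
    using agree Ld by (intro code_vals_inner_msg_agree) (simp add: embed_idx_in_node in_link_Pdag)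
  then have "inner_msg xx s = inner_msg xx' s"
    by (rule zero_error_code_decode[OF finite_srcs code s u inner_msg_in_msgs inner_msg_in_msgs])
  then have "mixed_msg xx s = mixed_msg xx' s"
    using \<sigma>[OF s] mixed_msg_less[OF s] s by (auto simp: inner_msg_def dest: inj_onD)
  then show ?thesis using Ld by (simp add: link_code_def)
qed (use agree in \<open>auto simp: in_link_Pdag code_vals_def link_code_def first_msg_def
      second_msg_def mixed_msg_def\<close>)

lemma first_msg_recovered:
  assumes xx: "xx \<in> msgs (Pdag P) dagger_alphabet" and xx': "xx' \<in> msgs (Pdag P) dagger_alphabet"
    and u: "u \<in> dest (Pdag P) Src1"
    and agree: "\<forall>i\<in>in_node (Pdag P) u. code_vals link_code xx i = code_vals link_code xx' i"
    and "s \<in> srcs P"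
  shows "first_msg xx s = first_msg xx' s"
proof -
  have recv: "link_code xx lk = link_code xx' lk" if "Inr lk \<in> in_node (Pdag P) u" for lk
    using agree that by (auto simp: code_vals_def)
  consider s0 u0 where "u = Tau s0 u0" "s0 \<in> srcs P" "u0 \<in> dest P s0" | "u = Eta" | "u = EtaStar" | "u = Psi"
    using u by (auto simp: dest_Pdag)
  then show ?thesis
  proof cases
    case (1 s0 u0)
    show ?thesis
    proof (cases "s = s0")
      case True
      then have "mixed_msg xx s = mixed_msg xx' s" "second_msg xx s = second_msg xx' s"
        using recv[of "Ld s u0"] recv[of "Lc s"] 1 by (auto simp: in_node_Pdag link_code_def)
      then show ?thesis by (rule first_msg_eq_if_mixed_eq[OF xx xx' \<open>s \<in> srcs P\<close>])
    next
      case False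
      then show ?thesis using recv[of "Lb s"] 1 \<open>s \<in> srcs P\<close> by (simp add: in_node_Pdag link_code_def)
    qed
  next
    case 3
    then have "mixed_msg xx s = mixed_msg xx' s" "second_msg xx s = second_msg xx' s"
      using recv[of "La s"] recv[of "Lc s"] \<open>s \<in> srcs P\<close> by (auto simp: in_node_Pdag link_code_def)
    then show ?thesis by (rule first_msg_eq_if_mixed_eq[OF xx xx' \<open>s \<in> srcs P\<close>])
  qed (use recv[of "Lb s"] \<open>s \<in> srcs P\<close> in \<open>auto simp: in_node_Pdag link_code_def\<close>)
qed

lemma zero_error_code_dagger: "zero_error_code (Pdag P) dagger_alphabet link_code"
  unfolding zero_error_code_def
proof (intro conjI ballI impI)
  show "finite (dagger_alphabet x)" "dagger_alphabet x \<noteq> {}" for x :: dsrc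
  proof -
    have "0 < prod M (srcs P)" using M_pos by (intro prod_pos) auto
    then show "finite (dagger_alphabet x)" "dagger_alphabet x \<noteq> {}" by auto
  qed
next
  fix lk xx xx'
  assume "lk \<in> links (Pdag P)" "xx \<in> msgs (Pdag P) dagger_alphabet" "xx' \<in> msgs (Pdag P) dagger_alphabet"
    "\<forall>i\<in>in_link (Pdag P) lk. code_vals link_code xx i = code_vals link_code xx' i"
  then show "link_code xx lk = link_code xx' lk" by (rule link_code_determined)
next
  fix x u xx xx'
  assume u: "u \<in> dest (Pdag P) x" and xx: "xx \<in> msgs (Pdag P) dagger_alphabet"
    and xx': "xx' \<in> msgs (Pdag P) dagger_alphabet"
    and agree: "\<forall>i\<in>in_node (Pdag P) u. code_vals link_code xx i = code_vals link_code xx' i"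
  show "xx x = xx' x"
  proof (cases x)
    case Src1
    then have "\<forall>s\<in>srcs P. D (xx Src1) s = D (xx' Src1) s"
      using first_msg_recovered[OF xx xx' _ agree] u by (simp add: first_msg_def)
    then show ?thesis using D_eq_if_eq_on_srcs xx xx' Src1 by (simp add: msgs_dagger_iff)
  next
    case Src2
    then have "Inr (Lc s) \<in> in_node (Pdag P) u" if "s \<in> srcs P" for s
      using u that by (auto simp: dest_Pdag in_node_Pdag)
    then have "code_vals link_code xx (Inr (Lc s)) = code_vals link_code xx' (Inr (Lc s))"
      if "s \<in> srcs P" for s
      using agree that by blast
    then have "\<forall>s\<in>srcs P. D (xx Src2) s = D (xx' Src2) s"
      by (simp add: code_vals_def link_code_def second_msg_def)
    then show ?thesis using D_eq_if_eq_on_srcs xx xx' Src2 by (simp add: msgs_dagger_iff)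
  qed
qed

lemma card_link_alphabet_dagger:
  assumes "lk \<in> links (Pdag P)"
  shows "real (card (link_alphabet (Pdag P) dagger_alphabet link_code lk))
    \<le> Tdag_cap (\<lambda>s. real (M s)) (\<lambda>e. real (card (link_alphabet P A F e))) lk"
proof -
  define bound where "bound = (case lk of OldL e \<Rightarrow> link_alphabet P A F e | La s \<Rightarrow> {..<M s}
      | Lb s \<Rightarrow> {..<M s} | Lc s \<Rightarrow> {..<M s} | Ld s u \<Rightarrow> {..<M s})"
  have "link_alphabet (Pdag P) dagger_alphabet link_code lk \<subseteq> bound"
  proof
    fix v assume "v \<in> link_alphabet (Pdag P) dagger_alphabet link_code lk"
    then obtain xx where xx: "xx \<in> msgs (Pdag P) dagger_alphabet" "v = link_code xx lk"
      by (auto simp: link_alphabet_def)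
    show "v \<in> bound"
      using assms xx inner_msg_in_msgs mixed_msg_less D_less
      by (cases lk) (auto simp: bound_def link_code_def link_alphabet_def msgs_dagger_iff
          first_msg_def second_msg_def)
  qed
  moreover have "finite bound"
    using finite_link_alphabet[OF finite_srcs code] by (cases lk) (auto simp: bound_def)
  ultimately have "card (link_alphabet (Pdag P) dagger_alphabet link_code lk) \<le> card bound"
    by (rule card_mono[rotated])
  then show ?thesis by (cases lk) (auto simp: bound_def)
qed

lemma ex_dagger_network_code:
  "\<exists>Q. network_code (Pdag P) Q \<and> decodes (Pdag P) Q \<and> (\<forall>x. card (SP Q (Inl x)) = prod M (srcs P)) \<and>
     (\<forall>lk\<in>links (Pdag P). real (card (SP Q (Inr lk)))
        \<le> Tdag_cap (\<lambda>s. real (M s)) (\<lambda>e. real (card (link_alphabet P A F e))) lk)"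
proof (intro exI[of _ "code_pmf (Pdag P) dagger_alphabet link_code"] conjI allI ballI)
  have fin: "finite (srcs (Pdag P))" by simp
  show "network_code (Pdag P) (code_pmf (Pdag P) dagger_alphabet link_code)"
    by (rule network_code_code_pmf[OF fin zero_error_code_dagger finite_links_Pdag[OF valid]])
  show "decodes (Pdag P) (code_pmf (Pdag P) dagger_alphabet link_code)"
    by (rule decodes_code_pmf[OF fin zero_error_code_dagger])
  show "card (SP (code_pmf (Pdag P) dagger_alphabet link_code) (Inl x)) = prod M (srcs P)" for x
    using SP_code_pmf_Inl[OF fin zero_error_code_dagger, of x] by (cases x) simp_all
  show "real (card (SP (code_pmf (Pdag P) dagger_alphabet link_code) (Inr lk)))
      \<le> Tdag_cap (\<lambda>s. real (M s)) (\<lambda>e. real (card (link_alphabet P A F e))) lk"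
    if "lk \<in> links (Pdag P)" for lk
    using card_link_alphabet_dagger[OF that] by (simp add: SP_code_pmf_Inr[OF fin zero_error_code_dagger])
qed
end

lemma network_code_Pdag_of_zero_error_code:
  assumes valid: "valid_problem P" and code: "zero_error_code P A F"
    and M: "\<And>s. s \<in> srcs P \<Longrightarrow> 1 \<le> M s \<and> M s \<le> card (A s)"
  shows "\<exists>Q. network_code (Pdag P) Q \<and> decodes (Pdag P) Q \<and> (\<forall>x. card (SP Q (Inl x)) = prod M (srcs P)) \<and>
     (\<forall>lk\<in>links (Pdag P). real (card (SP Q (Inr lk)))
        \<le> Tdag_cap (\<lambda>s. real (M s)) (\<lambda>e. real (card (link_alphabet P A F e))) lk)"
proof -
  have finite_srcs: "finite (srcs P)" using valid by (simp add: valid_problem_def)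
  have "\<exists>f. inj_on f {..<M s} \<and> f ` {..<M s} \<subseteq> A s" if "s \<in> srcs P" for s
    using card_le_inj[of "{..<M s}" "A s"] M[OF that] zero_error_code_alphabet[OF finite_srcs code that]
    by auto
  then have "\<exists>\<sigma>. \<forall>s\<in>srcs P. inj_on (\<sigma> s) {..<M s} \<and> \<sigma> s ` {..<M s} \<subseteq> A s"
    by (intro bchoice ballI)
  then obtain \<sigma> where \<sigma>: "\<forall>s\<in>srcs P. inj_on (\<sigma> s) {..<M s} \<and> \<sigma> s ` {..<M s} \<subseteq> A s" ..
  have "finite (PiE_dflt (srcs P) 0 (\<lambda>s. {..<M s}))"
    using finite_srcs by (intro finite_PiE_dflt) auto
  moreover have "card (PiE_dflt (srcs P) 0 (\<lambda>s. {..<M s})) = prod M (srcs P)"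
    using finite_srcs by (simp add: card_PiE_dflt)
  ultimately obtain D where D: "bij_betw D {..<prod M (srcs P)} (PiE_dflt (srcs P) 0 (\<lambda>s. {..<M s}))"
    using ex_bij_betw_nat_finite by (metis atLeast0LessThan)
  have "dagger_code P A F M \<sigma> D"
    using valid code M \<sigma> D by unfold_locales (auto simp: Suc_le_eq)
  then show ?thesis by (rule dagger_code.ex_dagger_network_code)
qed

lemma log_le_Tdag_cap:
  assumes "lk \<in> links (Pdag P)" "\<And>e. e \<in> links P \<Longrightarrow> 0 < K e" "1 \<le> N"
    "real N \<le> Tdag_cap (\<lambda>s. real (M s)) (\<lambda>e. real (K e) ^ k) lk"
  shows "log 2 N \<le> Tdag_cap (\<lambda>s. log 2 (M s)) (\<lambda>e. k * log 2 (K e)) lk"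
proof -
  have "log 2 N \<le> log 2 (Tdag_cap (\<lambda>s. real (M s)) (\<lambda>e. real (K e) ^ k) lk)"
    using assms(3,4) by (intro log_mono) auto
  also have "\<dots> = Tdag_cap (\<lambda>s. log 2 (M s)) (\<lambda>e. k * log 2 (K e)) lk"
    using assms(1,2) by (cases lk) (simp_all add: log_nat_power)
  finally show ?thesis .
qed

lemma network_code_Pdag_of_network_code:
  assumes valid: "valid_problem P" and nc: "network_code P Q" and dec: "decodes P Q"
    and M: "\<And>s. s \<in> srcs P \<Longrightarrow> 1 \<le> M s \<and> M s \<le> card (SP Q (Inl s)) ^ k"
  shows "\<exists>Q'. network_code (Pdag P) Q' \<and> decodes (Pdag P) Q' \<and>
    (\<forall>x. card (SP Q' (Inl x)) = prod M (srcs P)) \<and>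
    (\<forall>lk\<in>links (Pdag P). log 2 (card (SP Q' (Inr lk)))
        \<le> Tdag_cap (\<lambda>s. log 2 (M s)) (\<lambda>e. k * log 2 (card (SP Q (Inr e)))) lk)"
proof -
  have finite_srcs: "finite (srcs P)" using valid by (simp add: valid_problem_def)
  have finite_SP: "finite (SP Q (Inr e))" if "e \<in> links P" for e
    using nc that by (simp add: network_code_def idx_def)
  obtain F where F: "zero_error_code P (\<lambda>s. SP Q (Inl s)) F"
    "\<And>e. link_alphabet P (\<lambda>s. SP Q (Inl s)) F e \<subseteq> SP Q (Inr e)"
    using zero_error_code_of_network_code[OF valid nc dec] by blast
  let ?A = "prod_alphabet k (\<lambda>s. SP Q (Inl s))" and ?F = "prod_code P k F"
  have "\<exists>Q'. network_code (Pdag P) Q' \<and> decodes (Pdag P) Q' \<and> (\<forall>x. card (SP Q' (Inl x)) = prod M (srcs P)) \<and>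
     (\<forall>lk\<in>links (Pdag P). real (card (SP Q' (Inr lk)))
        \<le> Tdag_cap (\<lambda>s. real (M s)) (\<lambda>e. real (card (link_alphabet P ?A ?F e))) lk)"
    using M card_prod_alphabet[OF finite_srcs F(1)]
    by (intro network_code_Pdag_of_zero_error_code[OF valid zero_error_code_prod[OF finite_srcs F(1)]])
      simp
  then obtain Q' where Q': "network_code (Pdag P) Q'" "decodes (Pdag P) Q'"
    "\<forall>x. card (SP Q' (Inl x)) = prod M (srcs P)"
    "\<forall>lk\<in>links (Pdag P). real (card (SP Q' (Inr lk)))
        \<le> Tdag_cap (\<lambda>s. real (M s)) (\<lambda>e. real (card (link_alphabet P ?A ?F e))) lk"
    by blast
  have "card (link_alphabet P ?A ?F e) \<le> card (SP Q (Inr e)) ^ k" if "e \<in> links P" for e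
  proof -
    have "card (link_alphabet P (\<lambda>s. SP Q (Inl s)) F e) \<le> card (SP Q (Inr e))"
      using F(2) finite_SP[OF that] by (rule card_mono[rotated])
    then show ?thesis
      using card_link_alphabet_prod[OF finite_srcs F(1), of k e] power_mono order_trans by blast
  qed
  then have "Tdag_cap (\<lambda>s. real (M s)) (\<lambda>e. real (card (link_alphabet P ?A ?F e))) lk
      \<le> Tdag_cap (\<lambda>s. real (M s)) (\<lambda>e. real (card (SP Q (Inr e))) ^ k) lk"
    if "lk \<in> links (Pdag P)" for lk
    using that by (cases lk) (auto simp flip: of_nat_power)
  then have bound: "real (card (SP Q' (Inr lk)))
      \<le> Tdag_cap (\<lambda>s. real (M s)) (\<lambda>e. real (card (SP Q (Inr e))) ^ k) lk"
    if "lk \<in> links (Pdag P)" for lk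
    using Q'(4) that order_trans by blast
  have K: "0 < card (SP Q (Inr e))" if "e \<in> links P" for e
    using one_le_card_SP[OF finite_SP[OF that]] by simp
  have "log 2 (card (SP Q' (Inr lk)))
      \<le> Tdag_cap (\<lambda>s. log 2 (M s)) (\<lambda>e. k * log 2 (card (SP Q (Inr e)))) lk"
    if lk: "lk \<in> links (Pdag P)" for lk
  proof -
    have "finite (SP Q' (Inr lk))" using Q'(1) lk by (simp add: network_code_def)
    then have "1 \<le> card (SP Q' (Inr lk))" by (rule one_le_card_SP)
    then show ?thesis using log_le_Tdag_cap[OF lk K _ bound[OF lk]] by simp
  qed
  then show ?thesis using Q'(1-3) by blast
qed

section \<open>Rates\<close>

lemma nat_floor_powr_bounds:
  fixes a :: real
  assumes "0 \<le> a"
  shows "1 \<le> nat \<lfloor>2 powr a\<rfloor>" "log 2 (nat \<lfloor>2 powr a\<rfloor>) \<le> a" "a - 1 \<le> log 2 (nat \<lfloor>2 powr a\<rfloor>)"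
proof -
  have "1 \<le> 2 powr a" using assms by (simp add: ge_one_powr_ge_zero)
  then have floor: "1 \<le> \<lfloor>2 powr a\<rfloor>" by (simp add: le_floor_iff)
  then show "1 \<le> nat \<lfloor>2 powr a\<rfloor>" by linarith
  have real_eq: "real (nat \<lfloor>2 powr a\<rfloor>) = of_int \<lfloor>2 powr a\<rfloor>" using floor by simp
  have "log 2 (nat \<lfloor>2 powr a\<rfloor>) \<le> log 2 (2 powr a)"
    using floor real_eq by (intro log_mono) auto
  then show "log 2 (nat \<lfloor>2 powr a\<rfloor>) \<le> a" by simp
  have "2 powr a / 2 \<le> real (nat \<lfloor>2 powr a\<rfloor>)"
  proof (cases "2 \<le> 2 powr a")
    case True
    have "2 powr a - 1 < of_int \<lfloor>2 powr a\<rfloor>" by linarith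
    then show ?thesis using True real_eq by linarith
  qed (use floor real_eq in linarith)
  then have "log 2 (2 powr a / 2) \<le> log 2 (nat \<lfloor>2 powr a\<rfloor>)" by (intro log_mono) auto
  then show "a - 1 \<le> log 2 (nat \<lfloor>2 powr a\<rfloor>)" by (simp add: log_divide)
qed

lemma log_prod:
  fixes f :: "'a \<Rightarrow> real"
  assumes "finite S" "\<And>s. s \<in> S \<Longrightarrow> 0 < f s"
  shows "log b (\<Prod>s\<in>S. f s) = (\<Sum>s\<in>S. log b (f s))"
proof -
  have "ln (\<Prod>s\<in>S. f s) = (\<Sum>s\<in>S. ln (f s))"
    using assms(1) by (intro ln_prod) (auto dest!: assms(2))
  then show ?thesis by (simp add: log_def sum_divide_distrib)
qed

lemma tendsto_log_prod_rates:
  fixes M :: "'s \<Rightarrow> nat \<Rightarrow> nat"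
  assumes "finite S" "\<And>s n. s \<in> S \<Longrightarrow> 0 < M s n"
    and "\<And>s. s \<in> S \<Longrightarrow> (\<lambda>n. c n * log 2 (M s n)) \<longlonglongrightarrow> r s"
  shows "(\<lambda>n. c n * log 2 (\<Prod>s\<in>S. M s n)) \<longlonglongrightarrow> (\<Sum>s\<in>S. r s)"
proof -
  have "c n * log 2 (\<Prod>s\<in>S. M s n) = (\<Sum>s\<in>S. c n * log 2 (M s n))" for n
    using log_prod[OF assms(1), of "\<lambda>s. real (M s n)" 2] assms(2) by (simp add: sum_distrib_left)
  then show ?thesis using assms(3) by (simp add: tendsto_sum)
qed

text \<open>Re-blocking \<open>k\<close> uses of a code lets any rate \<open>0 \<le> r \<le> L\<close> below a limiting rate \<open>L\<close>
  be realised exactly in the limit, by alphabets of size \<open>\<lfloor>2\<^bsup>k r / c\<^esup>\<rfloor>\<close>.\<close>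

lemma floor_powr_rates:
  fixes c :: "nat \<Rightarrow> real" and k K :: "nat \<Rightarrow> nat"
  assumes c: "\<And>n. 0 < c n" and k: "\<And>n. 0 < k n" "\<And>n. c n / k n \<le> 1 / Suc n"
    and K: "\<And>n. 1 \<le> K n" and lim: "(\<lambda>n. c n * log 2 (K n)) \<longlonglongrightarrow> L" and r: "0 \<le> r" "r \<le> L"
  shows "\<exists>M. (\<forall>n. 1 \<le> M n \<and> M n \<le> K n ^ k n) \<and> (\<lambda>n. c n / k n * log 2 (M n)) \<longlonglongrightarrow> r"
proof -
  define t where "t n = min r (c n * log 2 (K n))" for n
  define a where "a n = k n * t n / c n" for n
  have a: "0 \<le> a n" for n using c[of n] K[of n] r by (simp add: a_def t_def)
  have ca: "c n / k n * a n = t n" for n using c[of n] k(1)[of n] by (simp add: a_def)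
  define M where "M n = nat \<lfloor>2 powr a n\<rfloor>" for n
  note bounds = nat_floor_powr_bounds[OF a, folded M_def]
  have M_le: "M n \<le> K n ^ k n" for n
  proof -
    have "a n \<le> k n * log 2 (K n)"
      using c[of n] k(1)[of n] by (simp add: a_def t_def divide_le_eq mult.commute mult_left_mono)
    then have "log 2 (M n) \<le> log 2 (K n ^ k n)"
      using bounds(2)[of n] K[of n] by (simp add: log_nat_power)
    then show ?thesis using bounds(1)[of n] K[of n] by simp
  qed
  have "(\<lambda>n. t n) \<longlonglongrightarrow> min r L" unfolding t_def by (intro tendsto_min tendsto_const lim)
  then have t: "(\<lambda>n. t n) \<longlonglongrightarrow> r" using r by (simp add: min_absorb1)
  have lim_M: "(\<lambda>n. c n / k n * log 2 (M n)) \<longlonglongrightarrow> r"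
  proof (rule tendsto_sandwich[of "\<lambda>n. t n - 1 / Suc n" _ _ "\<lambda>n. t n"])
    have "t n - 1 / Suc n \<le> c n / k n * log 2 (M n)" for n
    proof -
      have "t n - 1 / Suc n \<le> c n / k n * (a n - 1)"
        using k(2)[of n] ca[of n] by (simp add: right_diff_distrib)
      also have "\<dots> \<le> c n / k n * log 2 (M n)"
        using bounds(3)[of n] c[of n] k(1)[of n] by (intro mult_left_mono) auto
      finally show ?thesis .
    qed
    then show "\<forall>\<^sub>F n in sequentially. t n - 1 / Suc n \<le> c n / k n * log 2 (M n)" by simp
    have "c n / k n * log 2 (M n) \<le> c n / k n * a n" for n
      using bounds(2)[of n] c[of n] k(1)[of n] by (intro mult_left_mono) auto
    then show "\<forall>\<^sub>F n in sequentially. c n / k n * log 2 (M n) \<le> t n" using ca by simp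
    have "(\<lambda>n. t n - 1 / Suc n) \<longlonglongrightarrow> r - 0"
      using LIMSEQ_inverse_real_of_nat by (intro tendsto_diff t) (simp add: inverse_eq_divide)
    then show "(\<lambda>n. t n - 1 / Suc n) \<longlonglongrightarrow> r" by simp
  qed (rule t)
  show ?thesis using bounds(1) M_le lim_M by (intro exI[of _ M]) simp
qed

lemma block_alphabets:
  fixes c :: "nat \<Rightarrow> real" and K :: "'s \<Rightarrow> nat \<Rightarrow> nat"
  assumes c: "\<And>n. 0 < c n" and K: "\<And>s n. s \<in> S \<Longrightarrow> 1 \<le> K s n"
    and lim: "\<forall>s\<in>S. \<exists>L. (\<lambda>n. c n * log 2 (K s n)) \<longlonglongrightarrow> L \<and> r s \<le> L"
    and r: "\<forall>s\<in>S. 0 \<le> r s"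
  shows "\<exists>k M. (\<forall>n. 0 < k n) \<and> (\<forall>s\<in>S. \<forall>n. 1 \<le> M s n \<and> M s n \<le> K s n ^ k n)
    \<and> (\<forall>s\<in>S. (\<lambda>n. c n / k n * log 2 (M s n)) \<longlonglongrightarrow> r s)"
proof -
  define k where "k n = nat \<lceil>c n * Suc n\<rceil> + 1" for n
  have k: "0 < k n" "c n / k n \<le> 1 / Suc n" for n
  proof -
    show "0 < k n" by (simp add: k_def)
    have "c n * Suc n \<le> k n" unfolding k_def by linarith
    then show "c n / k n \<le> 1 / Suc n" using \<open>0 < k n\<close> by (simp add: field_simps)
  qed
  have "\<exists>M. (\<forall>n. 1 \<le> M n \<and> M n \<le> K s n ^ k n) \<and> (\<lambda>n. c n / k n * log 2 (M n)) \<longlonglongrightarrow> r s"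
    if s: "s \<in> S" for s
  proof -
    obtain L where L: "(\<lambda>n. c n * log 2 (K s n)) \<longlonglongrightarrow> L" "r s \<le> L" using lim s by blast
    have "0 \<le> r s" using r s by blast
    then show ?thesis by (rule floor_powr_rates[OF c k K[OF s] L(1) _ L(2)])
  qed
  then have "\<exists>M. \<forall>s\<in>S. (\<forall>n. 1 \<le> M s n \<and> M s n \<le> K s n ^ k n)
      \<and> (\<lambda>n. c n / k n * log 2 (M s n)) \<longlonglongrightarrow> r s"
    by (rule bchoice[OF ballI])
  then show ?thesis using k(1) by blast
qed

text \<open>For zero-achievability it suffices to bound the link rates by convergent sequences:
  the link rates are nonnegative, hence bounded, and converge along a subsequence.\<close>

lemma zero_achievable_of_rate_bounds:
  assumes fin: "finite (links P)"
    and Q: "\<And>n. network_code P (Q n)" "\<And>n. decodes P (Q n)" and c: "\<And>n. 0 < c n"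
    and src: "\<And>s. s \<in> srcs P \<Longrightarrow> (\<lambda>n. c n * log 2 (card (SP (Q n) (Inl s)))) \<longlonglongrightarrow> L s"
      "\<And>s. s \<in> srcs P \<Longrightarrow> fst t s \<le> L s"
    and bound: "\<And>e n. e \<in> links P \<Longrightarrow> c n * log 2 (card (SP (Q n) (Inr e))) \<le> U e n"
    and U: "\<And>e. e \<in> links P \<Longrightarrow> (\<lambda>n. U e n) \<longlonglongrightarrow> V e" "\<And>e. e \<in> links P \<Longrightarrow> V e \<le> snd t e"
  shows "zero_achievable P t"
proof -
  define y where "y e n = c n * log 2 (card (SP (Q n) (Inr e)))" for e n
  have y: "0 \<le> y e n" if "e \<in> links P" for e n
  proof -
    have "finite (SP (Q n) (Inr e))" using Q(1)[of n] that by (simp add: network_code_def idx_def)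
    then have "1 \<le> card (SP (Q n) (Inr e))" by (rule one_le_card_SP)
    then show ?thesis using c[of n] by (simp add: y_def)
  qed
  have "\<exists>B. \<forall>n. \<bar>y e n\<bar> \<le> B" if e: "e \<in> links P" for e
  proof -
    obtain B where "\<And>n. norm (U e n) \<le> B"
      using convergent_imp_Bseq[OF convergentI[OF U(1)[OF e]]] by (auto simp: Bseq_def)
    then show ?thesis using y[OF e] bound[OF e] by (metis abs_le_iff abs_of_nonneg order_trans real_norm_def y_def)
  qed
  then have "\<exists>B. \<forall>e\<in>links P. \<forall>n. \<bar>y e n\<bar> \<le> B e" by (intro bchoice ballI)
  then obtain B where "\<forall>e\<in>links P. \<forall>n. \<bar>y e n\<bar> \<le> B e" ..
  then have "\<exists>r. strict_mono r \<and> (\<forall>e\<in>links P. convergent (\<lambda>n. y e (r n)))"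
    using convergent_subseq_finite_family[OF fin, of "\<lambda>n e. y e n" B] by simp
  then obtain r where r: "strict_mono r" "\<And>e. e \<in> links P \<Longrightarrow> convergent (\<lambda>n. y e (r n))"
    by blast
  show ?thesis unfolding zero_achievable_def
  proof (intro exI[of _ "\<lambda>n. Q (r n)"] exI[of _ "\<lambda>n. c (r n)"] conjI allI ballI)
    show "\<exists>L. (\<lambda>n. c (r n) * log 2 (card (SP (Q (r n)) (Inl s)))) \<longlonglongrightarrow> L \<and> fst t s \<le> L"
      if "s \<in> srcs P" for s
      using LIMSEQ_subseq_LIMSEQ[OF src(1)[OF that] r(1)] src(2)[OF that] by (auto simp: o_def)
    show "\<exists>L. (\<lambda>n. c (r n) * log 2 (card (SP (Q (r n)) (Inr e)))) \<longlonglongrightarrow> L \<and> L \<le> snd t e"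
      if e: "e \<in> links P" for e
    proof -
      obtain L where L: "(\<lambda>n. y e (r n)) \<longlonglongrightarrow> L" using r(2)[OF e] by (auto simp: convergent_def)
      have "(\<lambda>n. U e (r n)) \<longlonglongrightarrow> V e"
        using LIMSEQ_subseq_LIMSEQ[OF U(1)[OF e] r(1)] by (simp add: o_def)
      then have "L \<le> V e" using L bound[OF e] by (intro LIMSEQ_le[OF L]) (auto simp: y_def)
      then show ?thesis using L U(2)[OF e] by (auto simp: y_def)
    qed
  qed (use Q c in \<open>auto simp: decodes_def\<close>)
qed

lemma zero_achievable_Pdag:
  fixes P :: "('v, 'e, 's) problem"
  assumes valid: "valid_problem P" and rt: "rate_capacity_tuple P (l, w)"
    and za: "zero_achievable P (l, w)"
  shows "zero_achievable (Pdag P) (Tdag P (l, w))"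
proof -
  have finite_srcs: "finite (srcs P)" using valid by (simp add: valid_problem_def)
  obtain Q :: "nat \<Rightarrow> ('s + 'e \<Rightarrow> nat) pmf" and c where
    Q: "\<And>n. network_code P (Q n)" "\<And>n. decodes P (Q n)" and c: "\<And>n. 0 < c n"
    and src: "\<forall>s\<in>srcs P. \<exists>L. (\<lambda>n. c n * log 2 (card (SP (Q n) (Inl s)))) \<longlonglongrightarrow> L \<and> l s \<le> L"
    and lnk: "\<forall>e\<in>links P. \<exists>L. (\<lambda>n. c n * log 2 (card (SP (Q n) (Inr e)))) \<longlonglongrightarrow> L \<and> L \<le> w e"
    using za unfolding zero_achievable_def decodes_def by auto
  obtain Le where Le: "\<And>e. e \<in> links P \<Longrightarrow>
      (\<lambda>n. c n * log 2 (card (SP (Q n) (Inr e)))) \<longlonglongrightarrow> Le e \<and> Le e \<le> w e"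
    using bchoice[OF lnk] by blast
  have card_src: "1 \<le> card (SP (Q n) (Inl s))" if "s \<in> srcs P" for s n
    using Q(1)[of n] that by (intro one_le_card_SP) (simp add: network_code_def idx_def)
  have nonneg: "\<forall>s\<in>srcs P. 0 \<le> l s" using rt by (simp add: rate_capacity_tuple_def)
  obtain k M where k: "\<And>n. 0 < k n"
    and M: "\<And>s n. s \<in> srcs P \<Longrightarrow> 1 \<le> M s n \<and> M s n \<le> card (SP (Q n) (Inl s)) ^ k n"
      "\<And>s. s \<in> srcs P \<Longrightarrow> (\<lambda>n. c n / k n * log 2 (M s n)) \<longlonglongrightarrow> l s"
    using block_alphabets[where c = c and S = "srcs P" and K = "\<lambda>s n. card (SP (Q n) (Inl s))"
        and r = l, OF c card_src src nonneg] by blast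
  define good where "good n Q' \<longleftrightarrow> network_code (Pdag P) Q' \<and> decodes (Pdag P) Q' \<and>
      (\<forall>x. card (SP Q' (Inl x)) = (\<Prod>s\<in>srcs P. M s n)) \<and>
      (\<forall>lk\<in>links (Pdag P). log 2 (card (SP Q' (Inr lk)))
          \<le> Tdag_cap (\<lambda>s. log 2 (M s n)) (\<lambda>e. k n * log 2 (card (SP (Q n) (Inr e)))) lk)" for n Q'
  have "\<exists>Q'. good n Q'" for n
    unfolding good_def
    by (rule network_code_Pdag_of_network_code[OF valid Q(1)[of n] Q(2)[of n] M(1)[of _ n]]) auto
  then have "\<forall>n. \<exists>Q'. good n Q'" ..
  from choice[OF this] obtain Q' where Q': "\<And>n. good n (Q' n)" by blast
  let ?c = "\<lambda>n. c n / k n"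
  define U where "U lk n = Tdag_cap (\<lambda>s. ?c n * log 2 (M s n))
    (\<lambda>e. c n * log 2 (card (SP (Q n) (Inr e)))) lk" for lk :: "('v, 's, 'e) dlink" and n
  have src_rate: "(\<lambda>n. ?c n * log 2 (card (SP (Q' n) (Inl x)))) \<longlonglongrightarrow> (\<Sum>s\<in>srcs P. l s)" for x
  proof -
    have "0 < M s n" if "s \<in> srcs P" for s n using M(1)[OF that, of n] by simp
    then show ?thesis using tendsto_log_prod_rates[OF finite_srcs _ M(2)] Q' by (simp add: good_def)
  qed
  have link_rate: "?c n * log 2 (card (SP (Q' n) (Inr lk))) \<le> U lk n"
    if lk: "lk \<in> links (Pdag P)" for lk n
  proof -
    have "log 2 (card (SP (Q' n) (Inr lk)))
        \<le> Tdag_cap (\<lambda>s. log 2 (M s n)) (\<lambda>e. k n * log 2 (card (SP (Q n) (Inr e)))) lk"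
      using Q'[of n] lk by (simp add: good_def)
    then have "?c n * log 2 (card (SP (Q' n) (Inr lk)))
        \<le> ?c n * Tdag_cap (\<lambda>s. log 2 (M s n)) (\<lambda>e. k n * log 2 (card (SP (Q n) (Inr e)))) lk"
      using c[of n] k[of n] by (intro mult_left_mono) auto
    also have "\<dots> = U lk n" using k[of n] by (cases lk) (simp_all add: U_def)
    finally show ?thesis .
  qed
  have U_lim: "(\<lambda>n. U lk n) \<longlonglongrightarrow> Tdag_cap l Le lk" if "lk \<in> links (Pdag P)" for lk
    using that M(2) Le by (cases lk) (auto simp: U_def)
  have cap: "Tdag_cap l Le lk \<le> snd (Tdag P (l, w)) lk" if "lk \<in> links (Pdag P)" for lk
    using that Le by (cases lk) (auto simp: Tdag_def)
  have rate: "fst (Tdag P (l, w)) x \<le> (\<Sum>s\<in>srcs P. l s)" for x by (simp add: Tdag_def)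
  have codes: "network_code (Pdag P) (Q' n)" "decodes (Pdag P) (Q' n)" "0 < ?c n" for n
    using Q'[of n] c[of n] k[of n] by (simp_all add: good_def)
  show ?thesis
    by (rule zero_achievable_of_rate_bounds[OF finite_links_Pdag[OF valid] codes src_rate rate
          link_rate U_lim cap])
qed

theorem theorem10:
  fixes P :: "('v, 'e, 's) problem"
    and l :: "'s \<Rightarrow> real" and w :: "'e \<Rightarrow> real"
  assumes "valid_problem P"
    and "rate_capacity_tuple P (l, w)"
  shows "(Tdag P (l, w) \<in> outer_bound (Pdag P) \<longrightarrow> (l, w) \<in> outer_bound P)
       \<and> (zero_achievable P (l, w) \<longrightarrow> zero_achievable (Pdag P) (Tdag P (l, w)))"
  using outer_bound_of_outer_bound_Pdag[OF assms(1)] zero_achievable_Pdag[OF assms] by blast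

end
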